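(* Assume the standing setting with $I$ an open interval (unbounded above), and that $X$ a.s. has no negative jumps. Let $v:I\to(0,\infty)$ and $\omega:I\to[0,\infty)$ be Lebesgue measurable with $\frac{1+\omega}{v}$ locally integrable on $I$ and $\int_{\inf I}^x\frac{dy}{v(y)}=\infty$ for some (equivalently all) $x\in I$; fix $\theta\in I$ and let $V(a):=\int_\theta^a\frac{dy}{v(y)}$, $a\in I$. Suppose that $$\mathbb{P}_x[e^{-qT_\ell^-};T_\ell^-<\zeta]=\exp\Big(-\int_0^{V(x)-V(\ell)}\omega\big(V^{-1}(V(x)-t)\big)dt-q\big(V(x)-V(\ell)\big)\Big)\quad\text{for all }\ell\le x\text{ in }I,\ q\in[0,\infty).$$ Then for every $x\in I$, under $\mathbb{P}_x$: $X_t=V^{-1}(V(x)-t)$ for all $t\in[0,\zeta)$ a.s., and $\mathbb{P}_x(t<\zeta)=\exp\big(-\int_0^t\omega(V^{-1}(V(x)-s))ds\big)$ for all $t\ge0$; i.e. $X$ has the law of the process which drifts downwards with speed $v(X_t)$ and is killed at rate $\omega(X_t)$.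
   Context: Standing setting: $I\subset\mathbb{R}$ is an interval unbounded above. $X=(X_t)_{t\in[0,\zeta)}$ is a process under complete probability measures $(\mathbb{P}_x)_{x\in I}$ (whose domains all contain $\mathcal{F}_\infty$), adapted to a filtration $\mathcal{F}=(\mathcal{F}_t)_{t\ge0}$ that is complete in the sense that each $\mathcal{F}_t$ contains every set differing from an event of $\mathcal{F}_t$ by a set that is $\mathbb{P}_x$-null for all $x\in I$. The lifetime $\zeta$ is an $\mathcal{F}$-stopping time with $\zeta>0$ a.s., and $X_t:=\infty$ (cemetery) for $t\ge\zeta$. "a.s." means $\mathbb{P}_x$-a.s. for every $x\in I$, and "negligible" means $\mathbb{P}_x$-null for every $x$. Assumptions: paths of $X$ are càdlàg in $I$ on $[0,\zeta)$; on $\{0<\zeta<\infty\}$ the limit $X_{\zeta-}$ exists in $I\cup\{\infty\}$ a.s. (set $X_{\zeta-}:=\infty$ when it does not exist); $x\mapsto\mathbb{P}_x(t<\zeta,X_t\in A)$ is universally measurable for Borel $A\subset I$; normality: $X_0=x$ $\mathbb{P}_x$-a.s.; strong Markov: for every $\mathcal{F}$-stopping time $S$ and measurable $H\ge0$, $\mathbb{P}_x[H(X_{S+\cdot})\mid\mathcal{F}_S]=\mathbb{P}_{X_S}[H(X)]$ $\mathbb{P}_x$-a.s. on $\{S<\zeta\}$; quasi left-continuity: if $\mathcal{F}$-stopping times $T_n$ increase a.s. to $T$ then $X_{T_n}\to X_T$ a.s. on $\{T<\zeta\}$; non-announceability: for every a.s. nondecreasing sequence $(T_n)$ of $\mathcal{F}$-stopping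 times, the event $\{T_n<\zeta\ \forall n\}\cap\{\lim_n T_n=\zeta\}\cap\{\zeta<\infty,X_{\zeta-}<\infty\}$ is negligible. Notation: $\mathbb{P}_x[Y;A]:=\mathbb{E}_x[Y\mathbf{1}_A]$; for $\ell\in I$, $T_\ell^-:=\inf\{t\in[0,\zeta):X_t\le\ell\}$ ($\inf\emptyset=\infty$). $V$ maps $I$ strictly increasingly onto an open interval unbounded below, and $V^{-1}$ is its inverse. *)

theory Defs
  imports "HOL-Probability.Probability"
begin

text \<open>A family of (complete) probability measures P x, x in I, on a common sample
space Omega; a filtration F indexed by t >= 0 (each F t a set of subsets of Omega);
a process X :: real => 'w => real, meaningful for t < zeta (the cemetery value
infinity for t >= zeta is modelled by the guard t < zeta); lifetime zeta :: 'w => ennreal.\<close>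

definition as_surely :: "real set \<Rightarrow> (real \<Rightarrow> 'w measure) \<Rightarrow> ('w \<Rightarrow> bool) \<Rightarrow> bool" where
  "as_surely I P \<phi> \<longleftrightarrow> (\<forall>x\<in>I. AE \<omega> in P x. \<phi> \<omega>)"

definition F_infty :: "'w set \<Rightarrow> (real \<Rightarrow> 'w set set) \<Rightarrow> 'w set set" where
  "F_infty \<Omega> F = sigma_sets \<Omega> (\<Union>t\<in>{0..}. F t)"

definition is_stopping_time :: "'w set \<Rightarrow> (real \<Rightarrow> 'w set set) \<Rightarrow> ('w \<Rightarrow> ennreal) \<Rightarrow> bool" where
  "is_stopping_time \<Omega> F T \<longleftrightarrow> (\<forall>t\<ge>0. {\<omega>\<in>\<Omega>. T \<omega> \<le> ennreal t} \<in> F t)"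

definition F_at :: "'w set \<Rightarrow> (real \<Rightarrow> 'w set set) \<Rightarrow> ('w \<Rightarrow> ennreal) \<Rightarrow> 'w set set" where
  "F_at \<Omega> F S = {A \<in> F_infty \<Omega> F. \<forall>t\<ge>0. A \<inter> {\<omega>\<in>\<Omega>. S \<omega> \<le> ennreal t} \<in> F t}"

text \<open>Path of X as an element of (I cup {infinity})^[0,infinity), the cemetery
being represented by the extended real infinity; path space with product sigma-algebra.\<close>
definition path_space :: "(real \<Rightarrow> ereal) measure" where
  "path_space = PiM {0..} (\<lambda>_. borel)"

definition Xpath :: "(real \<Rightarrow> 'w \<Rightarrow> real) \<Rightarrow> ('w \<Rightarrow> ennreal) \<Rightarrow> 'w \<Rightarrow> real \<Rightarrow> ereal" where
  "Xpath X \<zeta> \<omega> = (\<lambda>t\<in>{0..}. if ennreal t < \<zeta> \<omega> then ereal (X t \<omega>) else \<infinity>)"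

definition Xshift :: "(real \<Rightarrow> 'w \<Rightarrow> real) \<Rightarrow> ('w \<Rightarrow> ennreal) \<Rightarrow> ('w \<Rightarrow> ennreal) \<Rightarrow> 'w \<Rightarrow> real \<Rightarrow> ereal" where
  "Xshift X \<zeta> S \<omega> = (\<lambda>t\<in>{0..}. if ennreal (enn2real (S \<omega>) + t) < \<zeta> \<omega>
                                   then ereal (X (enn2real (S \<omega>) + t) \<omega>) else \<infinity>)"

definition univ_measurable_on :: "real set \<Rightarrow> (real \<Rightarrow> real) \<Rightarrow> bool" where
  "univ_measurable_on I f \<longleftrightarrow>
     (\<forall>\<mu>. finite_measure \<mu> \<and> sets \<mu> = sets (borel :: real measure) \<longrightarrow>
           (\<lambda>x. indicator I x * f x) \<in> borel_measurable (completion \<mu>))"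

definition standing_setting ::
  "real set \<Rightarrow> 'w set \<Rightarrow> (real \<Rightarrow> 'w set set) \<Rightarrow> (real \<Rightarrow> 'w measure)
     \<Rightarrow> (real \<Rightarrow> 'w \<Rightarrow> real) \<Rightarrow> ('w \<Rightarrow> ennreal) \<Rightarrow> bool" where
  "standing_setting I \<Omega> F P X \<zeta> \<longleftrightarrow>
     \<comment> \<open>I is an interval unbounded above\<close>
     is_interval I \<and> \<not> bdd_above I \<and>
     \<comment> \<open>filtration\<close>
     (\<forall>t\<ge>0. sigma_algebra \<Omega> (F t)) \<and>
     (\<forall>s t. 0 \<le> s \<longrightarrow> s \<le> t \<longrightarrow> F s \<subseteq> F t) \<and>
     \<comment> \<open>complete probability measures with domain containing F_infty\<close>
     (\<forall>x\<in>I. prob_space (P x) \<and> space (P x) = \<Omega> \<and> complete_measure (P x)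
             \<and> F_infty \<Omega> F \<subseteq> sets (P x)) \<and>
     \<comment> \<open>completeness of the filtration w.r.t. sets null for every P x\<close>
     (\<forall>t\<ge>0. \<forall>A\<in>F t. \<forall>B. B \<subseteq> \<Omega> \<longrightarrow>
         (\<forall>x\<in>I. (A - B) \<union> (B - A) \<in> null_sets (P x)) \<longrightarrow> B \<in> F t) \<and>
     \<comment> \<open>lifetime\<close>
     is_stopping_time \<Omega> F \<zeta> \<and>
     as_surely I P (\<lambda>\<omega>. 0 < \<zeta> \<omega>) \<and>
     \<comment> \<open>adaptedness\<close>
     (\<forall>t\<ge>0. \<forall>B\<in>sets borel. {\<omega>\<in>\<Omega>. ennreal t < \<zeta> \<omega> \<and> X t \<omega> \<in> B} \<in> F t) \<and>
     \<comment> \<open>paths cadlag in I on [0, zeta)\<close>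
     (\<forall>\<omega>\<in>\<Omega>. \<forall>t\<ge>0. ennreal t < \<zeta> \<omega> \<longrightarrow>
         X t \<omega> \<in> I \<and> continuous (at_right t) (\<lambda>s. X s \<omega>) \<and>
         (0 < t \<longrightarrow> (\<exists>l\<in>I. ((\<lambda>s. X s \<omega>) \<longlongrightarrow> l) (at_left t)))) \<and>
     \<comment> \<open>left limit at zeta exists in I cup {infinity} a.s. on {0 < zeta < infinity}\<close>
     as_surely I P (\<lambda>\<omega>. 0 < \<zeta> \<omega> \<and> \<zeta> \<omega> < \<infinity> \<longrightarrow>
         (\<exists>l\<in>I. ((\<lambda>s. X s \<omega>) \<longlongrightarrow> l) (at_left (enn2real (\<zeta> \<omega>))))
         \<or> filterlim (\<lambda>s. X s \<omega>) at_top (at_left (enn2real (\<zeta> \<omega>)))) \<and>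
     \<comment> \<open>universal measurability of x |-> P_x(t < zeta, X_t in A)\<close>
     (\<forall>t\<ge>0. \<forall>A\<in>sets borel. A \<subseteq> I \<longrightarrow>
         univ_measurable_on I (\<lambda>x. measure (P x) {\<omega>\<in>\<Omega>. ennreal t < \<zeta> \<omega> \<and> X t \<omega> \<in> A})) \<and>
     \<comment> \<open>normality\<close>
     (\<forall>x\<in>I. AE \<omega> in P x. 0 < \<zeta> \<omega> \<and> X 0 \<omega> = x) \<and>
     \<comment> \<open>strong Markov property: P_x[H(X_{S+.}) | F_S] = P_{X_S}[H(X)] a.s. on {S < zeta}\<close>
     (\<forall>S. is_stopping_time \<Omega> F S \<longrightarrow>
        (\<forall>H\<in>borel_measurable path_space. \<forall>x\<in>I.
          \<exists>g \<in> borel_measurable (sigma \<Omega> (F_at \<Omega> F S)).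
            (AE \<omega> in P x. S \<omega> < \<zeta> \<omega> \<longrightarrow>
               g \<omega> = (\<integral>\<^sup>+\<omega>'. (H (Xpath X \<zeta> \<omega>') :: ennreal) \<partial>P (X (enn2real (S \<omega>)) \<omega>))) \<and>
            (\<forall>A\<in>F_at \<Omega> F S.
               (\<integral>\<^sup>+\<omega>. indicator (A \<inter> {\<omega>. S \<omega> < \<zeta> \<omega>}) \<omega> * H (Xshift X \<zeta> S \<omega>) \<partial>P x)
             = (\<integral>\<^sup>+\<omega>. indicator (A \<inter> {\<omega>. S \<omega> < \<zeta> \<omega>}) \<omega> * g \<omega> \<partial>P x)))) \<and>
     \<comment> \<open>quasi left-continuity\<close>
     (\<forall>T Tn. (\<forall>n. is_stopping_time \<Omega> F (Tn n)) \<longrightarrow>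
        as_surely I P (\<lambda>\<omega>. incseq (\<lambda>n. Tn n \<omega>) \<and> (SUP n. Tn n \<omega>) = T \<omega>) \<longrightarrow>
        as_surely I P (\<lambda>\<omega>. T \<omega> < \<zeta> \<omega> \<longrightarrow>
           (\<lambda>n. X (enn2real (Tn n \<omega>)) \<omega>) \<longlonglongrightarrow> X (enn2real (T \<omega>)) \<omega>)) \<and>
     \<comment> \<open>non-announceability of finite killing from a point of I\<close>
     (\<forall>Tn. (\<forall>n. is_stopping_time \<Omega> F (Tn n)) \<longrightarrow>
        as_surely I P (\<lambda>\<omega>. incseq (\<lambda>n. Tn n \<omega>)) \<longrightarrow>
        as_surely I P (\<lambda>\<omega>. \<not> ((\<forall>n. Tn n \<omega> < \<zeta> \<omega>) \<and> (SUP n. Tn n \<omega>) = \<zeta> \<omega> \<and>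
             \<zeta> \<omega> < \<infinity> \<and> (\<exists>l\<in>I. ((\<lambda>s. X s \<omega>) \<longlongrightarrow> l) (at_left (enn2real (\<zeta> \<omega>)))))))"

text \<open>First passage time below level l: inf {t in [0,zeta) : X_t <= l}, inf of empty set = infinity.\<close>
definition Tminus :: "(real \<Rightarrow> 'w \<Rightarrow> real) \<Rightarrow> ('w \<Rightarrow> ennreal) \<Rightarrow> real \<Rightarrow> 'w \<Rightarrow> ennreal" where
  "Tminus X \<zeta> l \<omega> = Inf (ennreal ` {t. 0 \<le> t \<and> ennreal t < \<zeta> \<omega> \<and> X t \<omega> \<le> l})"

definition Vscale :: "(real \<Rightarrow> real) \<Rightarrow> real \<Rightarrow> real \<Rightarrow> real" where
  "Vscale v \<theta> a = (if \<theta> \<le> a then (LINT y:{\<theta>..a}|lebesgue. 1 / v y)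
                     else - (LINT y:{a..\<theta>}|lebesgue. 1 / v y))"

end

theory Submission
  imports Defs
begin

text \<open>The Laplace transform of \<open>T\<^sub>l\<^sup>-\<close> under \<open>P\<^sub>x\<close> is that of the constant \<open>V x - V l\<close>, so
  letting \<open>q \<rightarrow> \<infinity>\<close> shows that \<open>X\<close> can never be below the deterministic path
  \<open>V\<^sup>-\<^sup>1(V x - t)\<close>.  Conversely, if \<open>X\<^sub>t\<close> were above this path with positive probability,
  the strong Markov property at \<open>t\<close> would make the passage below some level \<open>l\<close> late with
  positive probability; the Laplace transform at \<open>q = 1\<close> turns this into a jump of the
  monotone function \<open>l \<mapsto> P\<^sub>x(T\<^sub>l\<^sup>- < \<zeta>)\<close> at \<open>l\<close>, impossible at its continuity points.
  Once the path is deterministic, \<open>{T\<^sub>l\<^sup>- < \<zeta>} = {t < \<zeta>}\<close> for \<open>l = V\<^sup>-\<^sup>1(V x - t)\<close>, and \<open>q = 0\<close>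
  gives the survival probability.\<close>

section \<open>The scale function\<close>

lemma set_integrable_inverse_if_bounded:
  fixes v w :: "real \<Rightarrow> real"
  assumes "S \<in> sets lebesgue" "v \<in> borel_measurable (restrict_space lebesgue S)"
    and "\<And>y. y \<in> S \<Longrightarrow> 0 < v y" "\<And>y. y \<in> S \<Longrightarrow> 0 \<le> w y"
    and "set_integrable lebesgue S (\<lambda>y. (1 + w y) / v y)"
  shows "set_integrable lebesgue S (\<lambda>y. 1 / v y)"
proof (rule set_integrable_bound[OF assms(5)])
  have "(\<lambda>y. 1 / v y) \<in> borel_measurable (restrict_space lebesgue S)"
    using assms(2) by measurable
  then show "set_borel_measurable lebesgue S (\<lambda>y. 1 / v y)"
    using assms(1) unfolding set_borel_measurable_def
    by (subst (asm) borel_measurable_restrict_space_iff) auto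
  show "AE y in lebesgue. y \<in> S \<longrightarrow> norm (1 / v y) \<le> norm ((1 + w y) / v y)"
    using assms(3,4) by (auto simp: divide_right_mono)
qed

lemma open_interval_unbounded_above_cases:
  fixes I :: "real set"
  assumes "is_interval I" "open I" "\<not> bdd_above I" "I \<noteq> {}"
  obtains "I = UNIV" | a where "I = {a<..}"
proof -
  have upward: "y \<in> I" if "p \<in> I" "p \<le> y" for p y
  proof -
    obtain q where "q \<in> I" "y \<le> q"
      using assms(3) unfolding bdd_above_def by (meson linear)
    then show ?thesis using mem_is_interval_1_I[OF assms(1) that(1)] that(2) by blast
  qed
  show ?thesis
  proof (cases "bdd_below I")
    case True
    have "Inf I \<notin> I"
    proof
      assume "Inf I \<in> I"
      then obtain e where "e > 0" "ball (Inf I) e \<subseteq> I" using assms(2) openE by blast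
      then have "Inf I - e/2 \<in> I" by (auto simp: dist_real_def)
      then show False using True \<open>e > 0\<close> cInf_lower[of "Inf I - e/2" I] by linarith
    qed
    then have "I \<subseteq> {Inf I<..}"
      using True cInf_lower[of _ I] by (force simp: order_le_less)
    moreover have "{Inf I<..} \<subseteq> I"
    proof
      fix y assume "y \<in> {Inf I<..}"
      then obtain p where "p \<in> I" "p < y" using cInf_less_iff[of I y] True assms(4) by auto
      then show "y \<in> I" using upward by simp
    qed
    ultimately show ?thesis using that by blast
  next
    case False
    have "y \<in> I" for y
    proof -
      obtain p where "p \<in> I" "p \<le> y"
        using False unfolding bdd_below_def by (meson linear)
      then show "y \<in> I" using upward by blast
    qed
    then show ?thesis using that by blast
  qed
qed

locale scale_function =
  fixes I :: "real set" and v :: "real \<Rightarrow> real" and \<theta> :: real and V :: "real \<Rightarrow> real"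
  assumes I_interval: "is_interval I"
    and I_open: "open I"
    and I_unbounded_above: "\<not> bdd_above I"
    and v_pos: "\<And>y. y \<in> I \<Longrightarrow> 0 < v y"
    and inverse_v_integrable: "\<And>a b. {a..b} \<subseteq> I \<Longrightarrow> set_integrable lebesgue {a..b} (\<lambda>y. 1 / v y)"
    and inverse_v_diverges:
      "\<exists>x\<in>I. (\<integral>\<^sup>+y. indicator {y\<in>I. y \<le> x} y * ennreal (1 / v y) \<partial>lebesgue) = \<infinity>"
    and \<theta>_in_I: "\<theta> \<in> I"
    and V_eq_Vscale: "\<And>a. a \<in> I \<Longrightarrow> V a = Vscale v \<theta> a"
begin

lemma I_cases:
  obtains "I = UNIV" | a where "I = {a<..}"
  using open_interval_unbounded_above_cases[OF I_interval I_open I_unbounded_above] \<theta>_in_I by blast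

lemma atLeastAtMost_subset_I:
  assumes "a \<in> I" "b \<in> I"
  shows "{a..b} \<subseteq> I"
proof
  fix y assume "y \<in> {a..b}"
  then show "y \<in> I" using mem_is_interval_1_I[OF I_interval assms] by simp
qed

lemma I_upward_closed: "a \<in> I \<Longrightarrow> a \<le> b \<Longrightarrow> b \<in> I"
  by (cases rule: I_cases) auto

lemma exists_less_in_I:
  assumes "l \<in> I"
  obtains a where "a \<in> I" "a < l"
proof (cases rule: I_cases)
  case 1
  then show ?thesis using that[of "l - 1"] by simp
next
  case (2 c)
  then have "c < (c + l) / 2" "(c + l) / 2 < l" using assms by auto
  then show ?thesis using that[of "(c + l) / 2"] 2 by simp
qed

lemma inverse_v_integrable_on:
  assumes "a \<in> I" "b \<in> I"
  shows "(\<lambda>y. 1 / v y) integrable_on {a..b}"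
    and "(LINT y:{a..b}|lebesgue. 1 / v y) = integral {a..b} (\<lambda>y. 1 / v y)"
  using set_lebesgue_integral_eq_integral[OF inverse_v_integrable[OF atLeastAtMost_subset_I[OF assms]]]
  by auto

lemma V_diff:
  assumes "a \<in> I" "b \<in> I" "a \<le> b"
  shows "V b - V a = integral {a..b} (\<lambda>y. 1 / v y)"
proof -
  let ?f = "\<lambda>y. 1 / v y"
  have combine: "integral {p..q} ?f + integral {q..r} ?f = integral {p..r} ?f"
    if "p \<in> I" "r \<in> I" "p \<le> q" "q \<le> r" for p q r
    using Henstock_Kurzweil_Integration.integral_combine[OF that(3,4) inverse_v_integrable_on(1)[OF that(1,2)]] .
  have V: "V c = (if \<theta> \<le> c then integral {\<theta>..c} ?f else - integral {c..\<theta>} ?f)" if "c \<in> I" for c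
    using V_eq_Vscale[OF that] inverse_v_integrable_on(2) \<theta>_in_I that unfolding Vscale_def by auto
  consider "\<theta> \<le> a" | "a < \<theta>" "\<theta> \<le> b" | "b < \<theta>" by linarith
  then show ?thesis
  proof cases
    case 1
    then have "V a = integral {\<theta>..a} ?f" "V b = integral {\<theta>..b} ?f"
      using V assms by auto
    then show ?thesis using combine[OF \<theta>_in_I assms(2) 1 assms(3)] by linarith
  next
    case 2
    then have "V a = - integral {a..\<theta>} ?f" "V b = integral {\<theta>..b} ?f"
      using V assms by auto
    then show ?thesis using combine[OF assms(1,2), of \<theta>] 2 by linarith
  next
    case 3
    then have "V a = - integral {a..\<theta>} ?f" "V b = - integral {b..\<theta>} ?f"
      using V assms by auto
    then show ?thesis using combine[OF assms(1) \<theta>_in_I assms(3)] 3 by linarith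
  qed
qed

lemma integral_inverse_v_pos:
  assumes "a \<in> I" "b \<in> I" "a < b"
  shows "0 < integral {a..b} (\<lambda>y. 1 / v y)"
proof -
  let ?g = "\<lambda>y. indicator {a..b} y *\<^sub>R (1 / v y)"
  have pos: "0 < 1 / v y" if "y \<in> {a..b}" for y
    using v_pos atLeastAtMost_subset_I[OF assms(1,2)] that by auto
  have nonneg: "0 \<le> ?g y" for y
    using pos[of y] by (auto simp: indicator_def)
  have "integral\<^sup>L lebesgue ?g \<noteq> 0"
  proof
    assume "integral\<^sup>L lebesgue ?g = 0"
    then have "AE y in lebesgue. ?g y = 0"
      using integral_nonneg_eq_0_iff_AE[where M=lebesgue and f="?g"] nonneg inverse_v_integrable[of a b]
        atLeastAtMost_subset_I[OF assms(1,2)] unfolding set_integrable_def by auto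
    then have "AE y in lebesgue. y \<notin> {a..b}"
    proof eventually_elim
      case (elim y)
      then show ?case using pos[of y] by (auto simp: indicator_def split: if_splits)
    qed
    then have "{a..b} \<in> null_sets lebesgue"
      using AE_iff_null_sets[of "{a..b}" lebesgue] by simp
    then show False using assms(3) by (auto dest: null_setsD1)
  qed
  moreover have "integral\<^sup>L lebesgue ?g = integral {a..b} (\<lambda>y. 1 / v y)"
    using inverse_v_integrable_on(2)[OF assms(1,2)] unfolding set_lebesgue_integral_def by simp
  moreover have "0 \<le> integral\<^sup>L lebesgue ?g"
    using nonneg by simp
  ultimately show ?thesis by linarith
qed

lemma V_strict_mono_on: "strict_mono_on I V"
proof (rule strict_mono_onI)
  fix a b assume "a \<in> I" "b \<in> I" "a < b"
  then show "V a < V b" using V_diff[of a b] integral_inverse_v_pos[of a b] by simp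
qed

lemma V_less_iff: "a \<in> I \<Longrightarrow> b \<in> I \<Longrightarrow> V a < V b \<longleftrightarrow> a < b"
  using strict_mono_on_less[OF V_strict_mono_on] .

lemma V_le_iff: "a \<in> I \<Longrightarrow> b \<in> I \<Longrightarrow> V a \<le> V b \<longleftrightarrow> a \<le> b"
  using strict_mono_on_less_eq[OF V_strict_mono_on] .

lemma continuous_on_V: "a \<in> I \<Longrightarrow> b \<in> I \<Longrightarrow> continuous_on {a..b} V"
proof (rule continuous_on_eq)
  assume ab: "a \<in> I" "b \<in> I"
  show "continuous_on {a..b} (\<lambda>u. V a + integral {a..u} (\<lambda>y. 1 / v y))"
    by (intro continuous_intros indefinite_integral_continuous_1 inverse_v_integrable_on(1)[OF ab])
  show "V a + integral {a..u} (\<lambda>y. 1 / v y) = V u" if "u \<in> {a..b}" for u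
  proof -
    have "u \<in> I" using atLeastAtMost_subset_I[OF ab] that by blast
    then show ?thesis using V_diff[OF ab(1), of u] that by simp
  qed
qed

lemma nn_integral_inverse_v_Icc:
  assumes "a \<in> I" "b \<in> I" "a \<le> b"
  shows "(\<integral>\<^sup>+y. indicator {a..b} y * ennreal (1 / v y) \<partial>lebesgue) = ennreal (V b - V a)"
proof -
  let ?g = "\<lambda>y. indicator {a..b} y *\<^sub>R (1 / v y)"
  have integrable: "integrable lebesgue ?g"
    using inverse_v_integrable[OF atLeastAtMost_subset_I[OF assms(1,2)]] unfolding set_integrable_def .
  have nonneg: "0 \<le> ?g y" for y
    using v_pos[of y] atLeastAtMost_subset_I[OF assms(1,2)] by (auto simp: indicator_def)
  have "(\<integral>\<^sup>+y. indicator {a..b} y * ennreal (1 / v y) \<partial>lebesgue) = (\<integral>\<^sup>+y. ennreal (?g y) \<partial>lebesgue)"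
    by (intro nn_integral_cong) (simp add: indicator_def)
  also have "\<dots> = ennreal (integral\<^sup>L lebesgue ?g)"
    using nn_integral_eq_integral[OF integrable] nonneg by simp
  also have "integral\<^sup>L lebesgue ?g = V b - V a"
    using inverse_v_integrable_on(2)[OF assms(1,2)] V_diff[OF assms]
    unfolding set_lebesgue_integral_def by simp
  finally show ?thesis .
qed

lemma decseq_exhausting_below:
  assumes "x \<in> I"
  obtains e :: "nat \<Rightarrow> real"
  where "\<And>n. e n \<in> I" "\<And>n. e n \<le> x" "decseq e" "\<And>y. y \<in> I \<Longrightarrow> \<exists>n. e n \<le> y"
proof (cases rule: I_cases)
  case 1
  show ?thesis
  proof (rule that[of "\<lambda>n. x - real n"])
    show "decseq (\<lambda>n. x - real n)" by (rule decseq_SucI) simp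
    show "\<exists>n. x - real n \<le> y" for y
    proof -
      obtain n where "x - y < real n" using reals_Archimedean2 by blast
      then show ?thesis by (intro exI[of _ n]) simp
    qed
  qed (use 1 in auto)
next
  case (2 c)
  have cx: "c < x" using assms 2 by simp
  show ?thesis
  proof (rule that[of "\<lambda>n. c + (x - c) / real (Suc n)"])
    fix n
    show "c + (x - c) / real (Suc n) \<in> I" using cx 2 by simp
    have "(x - c) / real (Suc n) \<le> (x - c) / 1"
      using cx by (intro divide_left_mono) auto
    then show "c + (x - c) / real (Suc n) \<le> x" by simp
  next
    show "decseq (\<lambda>n. c + (x - c) / real (Suc n))"
      using cx by (intro decseq_SucI) (simp add: divide_left_mono)
  next
    fix y assume "y \<in> I"
    then have yc: "0 < y - c" using 2 by simp
    obtain n where n: "(x - c) / (y - c) < real n" using reals_Archimedean2 by blast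
    then have "x - c < real n * (y - c)" using yc by (simp add: field_simps)
    also have "\<dots> \<le> real (Suc n) * (y - c)" using yc by (intro mult_right_mono) auto
    finally have "(x - c) / real (Suc n) \<le> y - c" by (simp add: field_simps)
    then show "\<exists>n. c + (x - c) / real (Suc n) \<le> y" by (intro exI[of _ n]) simp
  qed
qed

lemma nn_integral_inverse_v_below:
  assumes x0: "x0 \<in> I" and e: "\<And>n. e n \<in> I" "\<And>n. e n \<le> x0" "decseq e"
    and exhausting: "\<And>y. y \<in> I \<Longrightarrow> \<exists>n. e n \<le> y"
  shows "(\<integral>\<^sup>+y. indicator {y\<in>I. y \<le> x0} y * ennreal (1 / v y) \<partial>lebesgue) = (SUP n. ennreal (V x0 - V (e n)))"
proof -
  define G where "G n y = indicator {e n..x0} y * ennreal (1 / v y)" for n y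
  have "(\<integral>\<^sup>+y. indicator {y\<in>I. y \<le> x0} y * ennreal (1 / v y) \<partial>lebesgue)
      = (\<integral>\<^sup>+y. (SUP n. G n y) \<partial>lebesgue)"
  proof (rule nn_integral_cong)
    fix y
    show "indicator {y\<in>I. y \<le> x0} y * ennreal (1 / v y) = (SUP n. G n y)"
    proof (cases "y \<in> I \<and> y \<le> x0")
      case True
      then obtain n where "e n \<le> y" using exhausting by blast
      then have "(SUP n. G n y) = ennreal (1 / v y)"
        using True by (intro antisym SUP_least SUP_upper2[of n]) (auto simp: G_def indicator_def)
      then show ?thesis using True by simp
    next
      case False
      then have "G n y = 0" for n
        using atLeastAtMost_subset_I[OF e(1) x0, of n] by (auto simp: G_def indicator_def)
      then show ?thesis using False by simp
    qed
  qed
  also have "\<dots> = (SUP n. integral\<^sup>N lebesgue (G n))"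
  proof (rule nn_integral_monotone_convergence_SUP)
    show "incseq G"
    proof (intro incseq_SucI le_funI)
      fix n y
      have "e (Suc n) \<le> e n" using \<open>decseq e\<close> by (simp add: decseq_SucD)
      then show "G n y \<le> G (Suc n) y" by (auto simp: G_def indicator_def)
    qed
    show "G n \<in> borel_measurable lebesgue" for n
    proof -
      have "(\<lambda>y. indicator {e n..x0} y *\<^sub>R (1 / v y)) \<in> borel_measurable lebesgue"
        using inverse_v_integrable[OF atLeastAtMost_subset_I[OF e(1) x0]]
        unfolding set_integrable_def by blast
      then show ?thesis unfolding G_def by (simp add: indicator_mult_ennreal)
    qed
  qed
  also have "\<dots> = (SUP n. ennreal (V x0 - V (e n)))"
    unfolding G_def using nn_integral_inverse_v_Icc[OF e(1) x0 e(2)] by simp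
  finally show ?thesis .
qed

lemma V_unbounded_below_at_divergence_point:
  obtains x0 where "x0 \<in> I" "\<And>s. 0 \<le> s \<Longrightarrow> \<exists>a\<in>I. a \<le> x0 \<and> V a \<le> V x0 - s"
proof -
  obtain x0 where x0: "x0 \<in> I"
    and diverges: "(\<integral>\<^sup>+y. indicator {y\<in>I. y \<le> x0} y * ennreal (1 / v y) \<partial>lebesgue) = \<infinity>"
    using inverse_v_diverges by blast
  obtain e :: "nat \<Rightarrow> real" where e: "\<And>n. e n \<in> I" "\<And>n. e n \<le> x0" "decseq e"
    and exhausting: "\<And>y. y \<in> I \<Longrightarrow> \<exists>n. e n \<le> y"
    using decseq_exhausting_below[OF x0] by blast
  have "\<exists>a\<in>I. a \<le> x0 \<and> V a \<le> V x0 - s" if "0 \<le> s" for s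
  proof -
    have "ennreal s < (SUP n. ennreal (V x0 - V (e n)))"
      using nn_integral_inverse_v_below[OF x0 e exhausting] diverges by simp
    then obtain n where "ennreal s < ennreal (V x0 - V (e n))" by (auto simp: less_SUP_iff)
    then have "s < V x0 - V (e n)" using that by (simp add: ennreal_less_iff)
    then show ?thesis using e(1,2) by (intro bexI[of _ "e n"]) auto
  qed
  then show ?thesis using that x0 by blast
qed

lemma V_unbounded_below:
  assumes "x \<in> I" "0 \<le> s"
  obtains a where "a \<in> I" "a \<le> x" "V a \<le> V x - s"
proof -
  obtain x0 where x0: "x0 \<in> I"
    and unbounded: "\<And>s. 0 \<le> s \<Longrightarrow> \<exists>a\<in>I. a \<le> x0 \<and> V a \<le> V x0 - s"
    using V_unbounded_below_at_divergence_point by blast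
  obtain a where a: "a \<in> I" "a \<le> x0" "V a \<le> V x0 - (s + max 0 (V x0 - V x))"
    using unbounded[of "s + max 0 (V x0 - V x)"] assms(2) by auto
  then have "V a \<le> V x - s" by linarith
  moreover have "a \<le> x"
    using \<open>V a \<le> V x - s\<close> assms V_le_iff[OF a(1) assms(1)] by linarith
  ultimately show ?thesis using that a(1) by blast
qed

lemma V_attains:
  assumes "x \<in> I" "0 \<le> s"
  obtains u where "u \<in> I" "u \<le> x" "V u = V x - s"
proof -
  obtain a where a: "a \<in> I" "a \<le> x" "V a \<le> V x - s"
    using V_unbounded_below[OF assms] .
  obtain u where u: "a \<le> u" "u \<le> x" "V u = V x - s"
    using IVT'[of V a "V x - s" x] a assms(2) continuous_on_V[OF a(1) assms(1)] by auto
  then show ?thesis using that atLeastAtMost_subset_I[OF a(1) assms(1)] by auto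
qed

definition drift :: "real \<Rightarrow> real \<Rightarrow> real" where
  "drift x t = inv_into I V (V x - t)"

lemma
  assumes "x \<in> I" "0 \<le> t"
  shows drift_in_I: "drift x t \<in> I" and V_drift: "V (drift x t) = V x - t"
proof -
  have "V x - t \<in> V ` I" using V_attains[OF assms] by (metis image_eqI)
  then show "drift x t \<in> I" "V (drift x t) = V x - t"
    unfolding drift_def by (auto intro: inv_into_into f_inv_into_f)
qed

lemma drift_le_start:
  assumes "x \<in> I" "0 \<le> t"
  shows "drift x t \<le> x"
  using V_le_iff[OF drift_in_I[OF assms] assms(1)] V_drift[OF assms] assms(2) by simp

lemma drift_less_iff:
  assumes "x \<in> I" "0 \<le> s" "0 \<le> t"
  shows "drift x s < drift x t \<longleftrightarrow> t < s"
  using V_less_iff[OF drift_in_I[OF assms(1,2)] drift_in_I[OF assms(1,3)]] V_drift assms by simp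

lemma drift_le_iff:
  assumes "x \<in> I" "0 \<le> s" "0 \<le> t"
  shows "drift x s \<le> drift x t \<longleftrightarrow> t \<le> s"
  using drift_less_iff[OF assms(1,3,2)] by linarith

end

section \<open>Consequences of the standing setting\<close>

locale standard_process =
  fixes I :: "real set" and \<Omega> :: "'w set" and F :: "real \<Rightarrow> 'w set set"
    and P :: "real \<Rightarrow> 'w measure" and X :: "real \<Rightarrow> 'w \<Rightarrow> real" and \<zeta> :: "'w \<Rightarrow> ennreal"
  assumes setting: "standing_setting I \<Omega> F P X \<zeta>"
begin

lemma prob_space_P: "x \<in> I \<Longrightarrow> prob_space (P x)"
  and space_P: "x \<in> I \<Longrightarrow> space (P x) = \<Omega>"
  and F_infty_subset_sets_P: "x \<in> I \<Longrightarrow> F_infty \<Omega> F \<subseteq> sets (P x)"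
  using setting unfolding standing_setting_def by auto

lemma sigma_algebra_F: "0 \<le> t \<Longrightarrow> sigma_algebra \<Omega> (F t)"
  and F_mono: "0 \<le> s \<Longrightarrow> s \<le> t \<Longrightarrow> F s \<subseteq> F t"
  and alive_event_in_F: "0 \<le> t \<Longrightarrow> B \<in> sets borel \<Longrightarrow> {\<omega>\<in>\<Omega>. ennreal t < \<zeta> \<omega> \<and> X t \<omega> \<in> B} \<in> F t"
  using setting unfolding standing_setting_def by auto

lemma path_in_I: "\<omega> \<in> \<Omega> \<Longrightarrow> 0 \<le> t \<Longrightarrow> ennreal t < \<zeta> \<omega> \<Longrightarrow> X t \<omega> \<in> I"
  and path_continuous_right:
    "\<omega> \<in> \<Omega> \<Longrightarrow> 0 \<le> t \<Longrightarrow> ennreal t < \<zeta> \<omega> \<Longrightarrow> continuous (at_right t) (\<lambda>s. X s \<omega>)"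
  using setting unfolding standing_setting_def by auto

lemma F_sets_into_space:
  assumes "0 \<le> t" "A \<in> F t"
  shows "A \<subseteq> \<Omega>"
proof -
  interpret sigma_algebra \<Omega> "F t" using sigma_algebra_F[OF assms(1)] .
  show ?thesis using sets_into_space[OF assms(2)] .
qed

lemma F_subset_F_infty: "0 \<le> t \<Longrightarrow> F t \<subseteq> F_infty \<Omega> F"
  unfolding F_infty_def by (auto intro: sigma_sets.Basic)

lemma F_subset_sets_P: "x \<in> I \<Longrightarrow> 0 \<le> t \<Longrightarrow> F t \<subseteq> sets (P x)"
  using F_subset_F_infty F_infty_subset_sets_P by blast

lemma alive_event_sets:
  "x \<in> I \<Longrightarrow> 0 \<le> t \<Longrightarrow> B \<in> sets borel \<Longrightarrow> {\<omega>\<in>\<Omega>. ennreal t < \<zeta> \<omega> \<and> X t \<omega> \<in> B} \<in> sets (P x)"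
  using F_subset_sets_P alive_event_in_F by blast

text \<open>Right-continuity of the paths lets every event of the form "X enters an open set" be
  witnessed at a rational time, which is what makes the events below measurable.\<close>

lemma rational_time_after:
  assumes "\<omega> \<in> \<Omega>" "0 \<le> s" "ennreal s < \<zeta> \<omega>" "open U" "X s \<omega> \<in> U" "s < b"
  obtains r where "r \<in> \<rat>" "s < r" "r < b" "ennreal r < \<zeta> \<omega>" "X r \<omega> \<in> U"
proof -
  obtain e where e: "ennreal s < e" "e < \<zeta> \<omega>" using dense assms(3) by blast
  then have "e < top" using top.not_eq_extremum by fastforce
  then obtain u where u: "e = ennreal u" "0 \<le> u" by (auto simp: less_top_ennreal)
  have "eventually (\<lambda>r. ennreal r < \<zeta> \<omega>) (at_right s)"
    unfolding eventually_at_right_field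
  proof (intro exI[of _ u] conjI allI impI)
    show "s < u" using e(1) u assms(2) ennreal_less_iff by simp
    show "ennreal r < \<zeta> \<omega>" if "s < r" "r < u" for r
    proof -
      have "ennreal r < ennreal u" using that assms(2) by (intro ennreal_lessI) auto
      then show ?thesis using e(2) u(1) by simp
    qed
  qed
  moreover have "eventually (\<lambda>r. X r \<omega> \<in> U) (at_right s)"
  proof (rule topological_tendstoD)
    show "((\<lambda>r. X r \<omega>) \<longlongrightarrow> X s \<omega>) (at_right s)"
      using path_continuous_right[OF assms(1-3)] unfolding continuous_within by simp
  qed (use assms(4,5) in simp_all)
  ultimately have "eventually (\<lambda>r. ennreal r < \<zeta> \<omega> \<and> X r \<omega> \<in> U) (at_right s)"
    by (rule eventually_conj)
  then obtain c where c: "s < c" "\<And>r. s < r \<Longrightarrow> r < c \<Longrightarrow> ennreal r < \<zeta> \<omega> \<and> X r \<omega> \<in> U"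
    unfolding eventually_at_right_field by blast
  obtain r where "r \<in> \<rat>" "s < r" "r < min b c"
    using Rats_dense_in_real[of s "min b c"] c(1) assms(6) by auto
  then show ?thesis using that c(2)[of r] by simp
qed

definition visits_below :: "real set \<Rightarrow> real \<Rightarrow> 'w set" where
  "visits_below U l = {\<omega>\<in>\<Omega>. \<exists>r\<in>\<rat> \<inter> U. 0 \<le> r \<and> ennreal r < \<zeta> \<omega> \<and> X r \<omega> < l}"

lemma visits_below_sets: "x \<in> I \<Longrightarrow> visits_below U l \<in> sets (P x)"
proof -
  assume x: "x \<in> I"
  have "visits_below U l = (\<Union>r\<in>{r\<in>\<rat> \<inter> U. 0 \<le> r}. {\<omega>\<in>\<Omega>. ennreal r < \<zeta> \<omega> \<and> X r \<omega> \<in> {..<l}})"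
    unfolding visits_below_def by auto
  also have "\<dots> \<in> sets (P x)"
    by (intro sets.countable_UN'' alive_event_sets[OF x])
       (auto intro: countable_subset[OF _ countable_rat])
  finally show ?thesis .
qed

lemma visits_below_mono: "U \<subseteq> U' \<Longrightarrow> l \<le> l' \<Longrightarrow> visits_below U l \<subseteq> visits_below U' l'"
  unfolding visits_below_def by (auto intro: less_le_trans)

lemma Tminus_le: "0 \<le> s \<Longrightarrow> ennreal s < \<zeta> \<omega> \<Longrightarrow> X s \<omega> \<le> l \<Longrightarrow> Tminus X \<zeta> l \<omega> \<le> ennreal s"
  unfolding Tminus_def by (rule Inf_lower) simp

lemma Tminus_ge:
  "(\<And>s. 0 \<le> s \<Longrightarrow> ennreal s < \<zeta> \<omega> \<Longrightarrow> X s \<omega> \<le> l \<Longrightarrow> c \<le> s) \<Longrightarrow> ennreal c \<le> Tminus X \<zeta> l \<omega>"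
  unfolding Tminus_def by (rule Inf_greatest) (auto intro: ennreal_leI)

lemma Tminus_less_zetaE:
  assumes "Tminus X \<zeta> l \<omega> < \<zeta> \<omega>"
  obtains s where "0 \<le> s" "ennreal s < \<zeta> \<omega>" "X s \<omega> \<le> l"
  using assms unfolding Tminus_def by (auto simp: Inf_less_iff)

lemma Tminus_less_zeta_if_visits_below:
  assumes "\<omega> \<in> visits_below U l"
  shows "Tminus X \<zeta> l \<omega> < \<zeta> \<omega>"
proof -
  obtain r where "0 \<le> r" "ennreal r < \<zeta> \<omega>" "X r \<omega> < l"
    using assms unfolding visits_below_def by blast
  then show ?thesis using Tminus_le[of r \<omega> l] by simp
qed

lemma visits_below_if_Tminus_less_zeta:
  assumes "\<omega> \<in> \<Omega>" "l < l'" "Tminus X \<zeta> l \<omega> < \<zeta> \<omega>"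
  shows "\<omega> \<in> visits_below {0..} l'"
proof -
  obtain s where s: "0 \<le> s" "ennreal s < \<zeta> \<omega>" "X s \<omega> \<le> l"
    using Tminus_less_zetaE[OF assms(3)] .
  obtain r where "r \<in> \<rat>" "s < r" "ennreal r < \<zeta> \<omega>" "X r \<omega> \<in> {..<l'}"
    using rational_time_after[OF assms(1) s(1,2), of "{..<l'}" "s + 1"] s(3) assms(2) by auto
  then show ?thesis
    using assms(1) s(1) unfolding visits_below_def by (auto intro!: bexI[of _ r])
qed

lemma stopping_time_const: "0 \<le> t \<Longrightarrow> is_stopping_time \<Omega> F (\<lambda>_. ennreal t)"
  unfolding is_stopping_time_def
proof (intro allI impI)
  fix s :: real assume "0 \<le> t" "0 \<le> s"
  interpret sigma_algebra \<Omega> "F s" using sigma_algebra_F[OF \<open>0 \<le> s\<close>] .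
  show "{\<omega> \<in> \<Omega>. ennreal t \<le> ennreal s} \<in> F s"
    by (cases "t \<le> s") (auto simp: ennreal_le_iff \<open>0 \<le> s\<close>)
qed

lemma F_at_const:
  assumes "0 \<le> t" "A \<in> F t"
  shows "A \<in> F_at \<Omega> F (\<lambda>_. ennreal t)"
  unfolding F_at_def
proof (intro CollectI conjI allI impI)
  show "A \<in> F_infty \<Omega> F" using F_subset_F_infty[OF assms(1)] assms(2) by blast
  have "A \<subseteq> \<Omega>" using F_sets_into_space[OF assms] .
  fix s :: real assume s: "0 \<le> s"
  interpret sigma_algebra \<Omega> "F s" using sigma_algebra_F[OF s] .
  show "A \<inter> {\<omega> \<in> \<Omega>. ennreal t \<le> ennreal s} \<in> F s"
  proof (cases "t \<le> s")
    case True
    then have "A \<inter> {\<omega> \<in> \<Omega>. ennreal t \<le> ennreal s} = A"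
      using \<open>A \<subseteq> \<Omega>\<close> by (auto intro: ennreal_leI)
    then show ?thesis using F_mono[OF assms(1) True] assms(2) by auto
  next
    case False
    then have "A \<inter> {\<omega> \<in> \<Omega>. ennreal t \<le> ennreal s} = {}" using s by (auto simp: ennreal_le_iff)
    then show ?thesis by simp
  qed
qed

lemma borel_measurable_F_at_imp_P:
  assumes "x \<in> I" "g \<in> borel_measurable (sigma \<Omega> (F_at \<Omega> F S))"
  shows "g \<in> borel_measurable (P x)"
proof (rule measurable_from_subalg[OF _ assms(2)])
  have "F_at \<Omega> F S \<subseteq> sets (P x)"
    using F_infty_subset_sets_P[OF assms(1)] unfolding F_at_def by auto
  moreover have "F_at \<Omega> F S \<subseteq> Pow \<Omega>"
    using calculation sets.space_closed[of "P x"] space_P[OF assms(1)] by auto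
  ultimately show "subalgebra (P x) (sigma \<Omega> (F_at \<Omega> F S))"
    unfolding subalgebra_def using sets.sigma_sets_subset[of "F_at \<Omega> F S" "P x"] space_P[OF assms(1)]
    by (simp add: sets_measure_of space_measure_of_conv)
qed

lemma strong_markovE:
  assumes "is_stopping_time \<Omega> F S" "H \<in> borel_measurable path_space" "x \<in> I"
  obtains g where "g \<in> borel_measurable (sigma \<Omega> (F_at \<Omega> F S))"
    and "AE \<omega> in P x. S \<omega> < \<zeta> \<omega> \<longrightarrow>
          g \<omega> = (\<integral>\<^sup>+\<omega>'. H (Xpath X \<zeta> \<omega>') \<partial>P (X (enn2real (S \<omega>)) \<omega>))"
    and "\<And>A. A \<in> F_at \<Omega> F S \<Longrightarrow>
          (\<integral>\<^sup>+\<omega>. indicator (A \<inter> {\<omega>. S \<omega> < \<zeta> \<omega>}) \<omega> * H (Xshift X \<zeta> S \<omega>) \<partial>P x)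
        = (\<integral>\<^sup>+\<omega>. indicator (A \<inter> {\<omega>. S \<omega> < \<zeta> \<omega>}) \<omega> * g \<omega> \<partial>P x)"
proof -
  from setting have "\<forall>S. is_stopping_time \<Omega> F S \<longrightarrow>
        (\<forall>H\<in>borel_measurable path_space. \<forall>x\<in>I.
          \<exists>g \<in> borel_measurable (sigma \<Omega> (F_at \<Omega> F S)).
            (AE \<omega> in P x. S \<omega> < \<zeta> \<omega> \<longrightarrow>
               g \<omega> = (\<integral>\<^sup>+\<omega>'. (H (Xpath X \<zeta> \<omega>') :: ennreal) \<partial>P (X (enn2real (S \<omega>)) \<omega>))) \<and>
            (\<forall>A\<in>F_at \<Omega> F S.
               (\<integral>\<^sup>+\<omega>. indicator (A \<inter> {\<omega>. S \<omega> < \<zeta> \<omega>}) \<omega> * H (Xshift X \<zeta> S \<omega>) \<partial>P x)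
             = (\<integral>\<^sup>+\<omega>. indicator (A \<inter> {\<omega>. S \<omega> < \<zeta> \<omega>}) \<omega> * g \<omega> \<partial>P x)))"
    unfolding standing_setting_def by (elim conjE) assumption
  then show ?thesis using assms that by blast
qed

lemma markov_positive:
  assumes x: "x \<in> I" and t: "0 \<le> t" and A: "A \<in> F t" "A \<subseteq> {\<omega>. ennreal t < \<zeta> \<omega>}"
    and A_pos: "emeasure (P x) A \<noteq> 0"
    and H: "H \<in> borel_measurable path_space"
    and H_pos: "\<And>\<omega>. \<omega> \<in> A \<Longrightarrow> 0 < (\<integral>\<^sup>+\<omega>'. H (Xpath X \<zeta> \<omega>') \<partial>P (X t \<omega>))"
  shows "0 < (\<integral>\<^sup>+\<omega>. indicator A \<omega> * H (Xshift X \<zeta> (\<lambda>_. ennreal t) \<omega>) \<partial>P x)"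
proof -
  let ?S = "\<lambda>_::'w. ennreal t"
  obtain g where g: "g \<in> borel_measurable (sigma \<Omega> (F_at \<Omega> F ?S))"
    and g_eq: "AE \<omega> in P x. ?S \<omega> < \<zeta> \<omega> \<longrightarrow>
          g \<omega> = (\<integral>\<^sup>+\<omega>'. H (Xpath X \<zeta> \<omega>') \<partial>P (X (enn2real (?S \<omega>)) \<omega>))"
    and shift: "\<And>A. A \<in> F_at \<Omega> F ?S \<Longrightarrow>
          (\<integral>\<^sup>+\<omega>. indicator (A \<inter> {\<omega>. ?S \<omega> < \<zeta> \<omega>}) \<omega> * H (Xshift X \<zeta> ?S \<omega>) \<partial>P x)
        = (\<integral>\<^sup>+\<omega>. indicator (A \<inter> {\<omega>. ?S \<omega> < \<zeta> \<omega>}) \<omega> * g \<omega> \<partial>P x)"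
    using strong_markovE[OF stopping_time_const[OF t] H x] by blast
  have A_sets: "A \<in> sets (P x)" using F_subset_sets_P[OF x t] A(1) by blast
  have "A \<inter> {\<omega>. ?S \<omega> < \<zeta> \<omega>} = A" using A(2) by blast
  then have eq: "(\<integral>\<^sup>+\<omega>. indicator A \<omega> * H (Xshift X \<zeta> ?S \<omega>) \<partial>P x) = (\<integral>\<^sup>+\<omega>. indicator A \<omega> * g \<omega> \<partial>P x)"
    using shift[OF F_at_const[OF t A(1)]] by simp
  have "(\<integral>\<^sup>+\<omega>. indicator A \<omega> * g \<omega> \<partial>P x) \<noteq> 0"
  proof
    assume "(\<integral>\<^sup>+\<omega>. indicator A \<omega> * g \<omega> \<partial>P x) = 0"
    moreover have "(\<lambda>\<omega>. indicator A \<omega> * g \<omega>) \<in> borel_measurable (P x)"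
      using borel_measurable_F_at_imp_P[OF x g] A_sets by measurable
    ultimately have "AE \<omega> in P x. indicator A \<omega> * g \<omega> = 0"
      by (simp add: nn_integral_0_iff_AE)
    then have "AE \<omega> in P x. \<omega> \<notin> A"
      using g_eq
    proof eventually_elim
      case (elim \<omega>)
      show ?case
      proof
        assume "\<omega> \<in> A"
        then have "0 < g \<omega>" using elim(2) A(2) H_pos t by auto
        then show False using elim(1) \<open>\<omega> \<in> A\<close> by simp
      qed
    qed
    then show False using A_pos AE_iff_null_sets[OF A_sets] by (simp add: null_sets_def)
  qed
  then show ?thesis using eq by (simp add: zero_less_iff_neq_zero)
qed

definition path_dips :: "real set \<Rightarrow> real \<Rightarrow> (real \<Rightarrow> ereal) set" where
  "path_dips U l = {p. \<exists>r\<in>\<rat> \<inter> U. 0 \<le> r \<and> p r < ereal l}"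

lemma path_dips_sets: "{p \<in> space path_space. p \<in> path_dips U l} \<in> sets path_space"
proof -
  have component: "{p \<in> space path_space. p r < ereal l} \<in> sets path_space" if "0 \<le> r" for r
  proof -
    have "(\<lambda>p. p r) \<in> measurable path_space (borel :: ereal measure)"
      unfolding path_space_def using that by (intro measurable_component_singleton) simp
    then show ?thesis by measurable
  qed
  have "{p \<in> space path_space. p \<in> path_dips U l}
      = (\<Union>r\<in>{r\<in>\<rat> \<inter> U. 0 \<le> r}. {p \<in> space path_space. p r < ereal l})"
    unfolding path_dips_def by auto
  also have "\<dots> \<in> sets path_space"
    by (intro sets.countable_UN'' component) (auto intro: countable_subset[OF _ countable_rat])
  finally show ?thesis .
qed

lemma borel_measurable_indicator_path_dips_diff:
  "(indicator (path_dips U l - path_dips U' l') :: (real \<Rightarrow> ereal) \<Rightarrow> ennreal)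
     \<in> borel_measurable path_space"
proof (rule borel_measurable_indicator')
  have "{p \<in> space path_space. p \<in> path_dips U l - path_dips U' l'}
      = {p \<in> space path_space. p \<in> path_dips U l} - {p \<in> space path_space. p \<in> path_dips U' l'}"
    by blast
  then show "{p \<in> space path_space. p \<in> path_dips U l - path_dips U' l'} \<in> sets path_space"
    using path_dips_sets by simp
qed

lemma Xpath_in_path_dips_iff:
  "\<omega> \<in> \<Omega> \<Longrightarrow> Xpath X \<zeta> \<omega> \<in> path_dips U l \<longleftrightarrow> \<omega> \<in> visits_below U l"
  unfolding Xpath_def path_dips_def visits_below_def by auto

lemma Xshift_in_path_dips_iff:
  assumes "\<omega> \<in> \<Omega>" "t \<in> \<rat>" "0 \<le> t"
  shows "Xshift X \<zeta> (\<lambda>_. ennreal t) \<omega> \<in> path_dips U l \<longleftrightarrow> \<omega> \<in> visits_below {r. t \<le> r \<and> r - t \<in> U} l"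
proof
  assume "Xshift X \<zeta> (\<lambda>_. ennreal t) \<omega> \<in> path_dips U l"
  then obtain r where "r \<in> \<rat>" "r \<in> U" "0 \<le> r" "ennreal (t + r) < \<zeta> \<omega>" "X (t + r) \<omega> < l"
    using assms(3) unfolding Xshift_def path_dips_def by (auto split: if_splits)
  then show "\<omega> \<in> visits_below {r. t \<le> r \<and> r - t \<in> U} l"
    unfolding visits_below_def using assms by (auto intro!: bexI[of _ "t + r"] Rats_add)
next
  assume "\<omega> \<in> visits_below {r. t \<le> r \<and> r - t \<in> U} l"
  then obtain r where "r \<in> \<rat>" "t \<le> r" "r - t \<in> U" "ennreal r < \<zeta> \<omega>" "X r \<omega> < l"
    unfolding visits_below_def by blast
  then show "Xshift X \<zeta> (\<lambda>_. ennreal t) \<omega> \<in> path_dips U l"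
    unfolding Xshift_def path_dips_def using assms
    by (auto intro!: bexI[of _ "r - t"] Rats_diff simp del: ennreal_plus)
qed

end

section \<open>Processes with the Laplace transforms of a downward drift\<close>

lemma nonpos_if_le_exp_decay:
  fixes m C k :: real
  assumes "0 < k" and bound: "\<And>q. 0 \<le> q \<Longrightarrow> m \<le> C * exp (- q * k)"
  shows "m \<le> 0"
proof (rule ccontr)
  assume "\<not> m \<le> 0"
  then have m: "0 < m" by simp
  then have C: "0 < C" using bound[of 0] by simp
  define q where "q = C / (m * k)"
  have q: "0 \<le> q" using m C assms(1) by (simp add: q_def)
  have "m * (1 + q * k) \<le> m * exp (q * k)"
    using m by (intro mult_left_mono) auto
  also have "\<dots> \<le> C" using bound[OF q] by (simp add: field_simps exp_minus)
  also have "C = m * (q * k)" using m assms(1) by (simp add: q_def)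
  finally show False using m by (simp add: algebra_simps)
qed

lemma mono_on_continuity_point:
  fixes f :: "real \<Rightarrow> real"
  assumes "mono_on J f" "{a<..<b} \<subseteq> J" "a < b"
  obtains l where "l \<in> {a<..<b}" "continuous (at l within J) f"
proof -
  have "countable {l\<in>J. \<not> continuous (at l within J) f}"
    using mono_on_ctble_discont[OF assms(1)] .
  then have "\<not> {a<..<b} \<subseteq> {l\<in>J. \<not> continuous (at l within J) f}"
    using countable_subset uncountable_open_interval assms(3) by blast
  then show ?thesis using that assms(2) by blast
qed

text \<open>The function \<open>c\<close> stands for \<open>exp (- \<integral>\<^sub>0\<^bsup>V x - V l\<^esup> w(V\<^sup>-\<^sup>1(V x - t)) dt)\<close>, that is for
  \<open>P\<^sub>x(T\<^sub>l\<^sup>- < \<zeta>)\<close>; only its positivity is used.\<close>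

locale downward_drift = scale_function I v \<theta> V + standard_process I \<Omega> F P X \<zeta>
  for I v \<theta> V \<Omega> F P X \<zeta> +
  fixes c :: "real \<Rightarrow> real \<Rightarrow> real"
  assumes c_pos: "\<And>x l. x \<in> I \<Longrightarrow> l \<in> I \<Longrightarrow> l \<le> x \<Longrightarrow> 0 < c x l"
    and laplace: "\<And>x l q. x \<in> I \<Longrightarrow> l \<in> I \<Longrightarrow> l \<le> x \<Longrightarrow> 0 \<le> q \<Longrightarrow>
         (\<integral>\<^sup>+\<omega>. indicator {\<omega>. Tminus X \<zeta> l \<omega> < \<zeta> \<omega>} \<omega>
                   * ennreal (exp (- q * enn2real (Tminus X \<zeta> l \<omega>))) \<partial>P x)
         = ennreal (c x l * exp (- q * (V x - V l)))"
begin

lemma passage_prob: "x \<in> I \<Longrightarrow> l \<in> I \<Longrightarrow> l \<le> x \<Longrightarrow>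
    (\<integral>\<^sup>+\<omega>. indicator {\<omega>. Tminus X \<zeta> l \<omega> < \<zeta> \<omega>} \<omega> \<partial>P x) = ennreal (c x l)"
  using laplace[of x l 0] by simp

text \<open>Chernoff bound: letting \<open>q \<rightarrow> \<infinity>\<close> in the Laplace transform shows that the passage time
  below \<open>l\<close> is never shorter than the deterministic one, \<open>V z - V l\<close>.\<close>

lemma visits_below_early_null:
  assumes z: "z \<in> I" and l: "l \<in> I" "l \<le> z" and D: "D < V z - V l"
  shows "visits_below {..<D} l \<in> null_sets (P z)"
proof -
  interpret prob_space "P z" using prob_space_P[OF z] .
  let ?E = "visits_below {..<D} l"
  have E: "?E \<in> sets (P z)" using visits_below_sets[OF z] .
  have "prob ?E \<le> c z l * exp (- q * (V z - V l - D))" if q: "0 \<le> q" for q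
  proof -
    have "(\<integral>\<^sup>+\<omega>. ennreal (exp (- q * D)) * indicator ?E \<omega> \<partial>P z)
        \<le> (\<integral>\<^sup>+\<omega>. indicator {\<omega>. Tminus X \<zeta> l \<omega> < \<zeta> \<omega>} \<omega>
                   * ennreal (exp (- q * enn2real (Tminus X \<zeta> l \<omega>))) \<partial>P z)"
    proof (intro nn_integral_mono)
      fix \<omega>
      show "ennreal (exp (- q * D)) * indicator ?E \<omega> \<le> indicator {\<omega>. Tminus X \<zeta> l \<omega> < \<zeta> \<omega>} \<omega>
                   * ennreal (exp (- q * enn2real (Tminus X \<zeta> l \<omega>)))"
      proof (cases "\<omega> \<in> ?E")
        case True
        then obtain r where r: "0 \<le> r" "r < D" "ennreal r < \<zeta> \<omega>" "X r \<omega> < l"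
          unfolding visits_below_def by blast
        then have "Tminus X \<zeta> l \<omega> \<le> ennreal r" by (intro Tminus_le) auto
        then have "enn2real (Tminus X \<zeta> l \<omega>) \<le> r" using r(1) enn2real_mono by fastforce
        then have "exp (- q * D) \<le> exp (- q * enn2real (Tminus X \<zeta> l \<omega>))"
          using r(2) q by (simp add: mult_left_mono)
        then show ?thesis using True Tminus_less_zeta_if_visits_below[OF True] by (simp add: ennreal_leI)
      qed simp
    qed
    also have "\<dots> = ennreal (c z l * exp (- q * (V z - V l)))" using laplace[OF z l q] .
    finally have "ennreal (exp (- q * D) * prob ?E) \<le> ennreal (c z l * exp (- q * (V z - V l)))"
      using nn_integral_cmult_indicator[OF E] by (simp add: emeasure_eq_measure ennreal_mult)
    then have "exp (- q * D) * prob ?E \<le> c z l * exp (- q * (V z - V l))"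
      using c_pos[OF z l] by (simp add: ennreal_le_iff)
    then have "prob ?E \<le> c z l * (exp (- q * (V z - V l)) / exp (- q * D))"
      by (simp only: times_divide_eq_right pos_le_divide_eq[OF exp_gt_zero] mult.commute)
    also have "exp (- q * (V z - V l)) / exp (- q * D) = exp (- q * (V z - V l - D))"
      by (simp add: exp_diff[symmetric] algebra_simps)
    finally show ?thesis .
  qed
  then have "prob ?E \<le> 0" using D by (intro nonpos_if_le_exp_decay[of "V z - V l - D"]) auto
  then show ?thesis using E by (simp add: emeasure_eq_measure null_sets_def measure_le_0_iff)
qed

lemma path_above_drift_AE:
  assumes z: "z \<in> I"
  shows "AE \<omega> in P z. \<forall>s\<ge>0. ennreal s < \<zeta> \<omega> \<longrightarrow> drift z s \<le> X s \<omega>"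
proof -
  let ?Q = "{p. fst p \<in> \<rat> \<and> snd p \<in> \<rat> \<and> fst p \<in> I \<and> fst p \<le> z \<and> snd p < V z - V (fst p)}"
  have "countable ?Q"
    by (rule countable_subset[of _ "\<rat> \<times> \<rat>"]) (auto intro: countable_rat)
  then have "AE \<omega> in P z. \<forall>p\<in>?Q. \<omega> \<notin> visits_below {..<snd p} (fst p)"
    by (intro AE_ball_countable' AE_not_in visits_below_early_null[OF z]) auto
  then show ?thesis
    using AE_space
  proof eventually_elim
    case (elim \<omega>)
    then have \<omega>: "\<omega> \<in> \<Omega>" using space_P[OF z] by simp
    show ?case
    proof (intro allI impI)
      fix s :: real assume s: "0 \<le> s" "ennreal s < \<zeta> \<omega>"
      show "drift z s \<le> X s \<omega>"
      proof (rule ccontr)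
        assume "\<not> drift z s \<le> X s \<omega>"
        then obtain l where l: "l \<in> \<rat>" "X s \<omega> < l" "l < drift z s"
          using Rats_dense_in_real[of "X s \<omega>" "drift z s"] by auto
        have l_in_I: "l \<in> I"
          using atLeastAtMost_subset_I[OF path_in_I[OF \<omega> s] drift_in_I[OF z s(1)]] l by auto
        have "V l < V (drift z s)" using V_less_iff[OF l_in_I drift_in_I[OF z s(1)]] l(3) by simp
        then have "s < V z - V l" using V_drift[OF z s(1)] by simp
        then obtain D where D: "D \<in> \<rat>" "s < D" "D < V z - V l"
          using Rats_dense_in_real by blast
        obtain r where "r \<in> \<rat>" "s < r" "r < D" "ennreal r < \<zeta> \<omega>" "X r \<omega> \<in> {..<l}"
          using rational_time_after[OF \<omega> s, of "{..<l}" D] l(2) D(2) by auto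
        then have "\<omega> \<in> visits_below {..<D} l"
          using \<omega> s(1) unfolding visits_below_def by (auto intro!: bexI[of _ r])
        moreover have "(l, D) \<in> ?Q"
          using l D l_in_I drift_le_start[OF z s(1)] by auto
        ultimately show False using elim(1) by fastforce
      qed
    qed
  qed
qed

lemma Tminus_ge_if_path_above_drift:
  assumes x: "x \<in> I" and l: "l \<in> I"
    and above: "\<forall>s\<ge>0. ennreal s < \<zeta> \<omega> \<longrightarrow> drift x s \<le> X s \<omega>"
  shows "ennreal (V x - V l) \<le> Tminus X \<zeta> l \<omega>"
proof (rule Tminus_ge)
  fix s assume s: "0 \<le> s" "ennreal s < \<zeta> \<omega>" "X s \<omega> \<le> l"
  then have "drift x s \<le> l" using above by force
  then show "V x - V l \<le> s"
    using V_le_iff[OF drift_in_I[OF x s(1)] l] V_drift[OF x s(1)] by simp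
qed

lemma measure_visits_below_le:
  assumes "x \<in> I" "l \<in> I" "l \<le> x"
  shows "measure (P x) (visits_below {0..} l) \<le> c x l"
proof -
  interpret prob_space "P x" using prob_space_P[OF assms(1)] .
  have "emeasure (P x) (visits_below {0..} l) = (\<integral>\<^sup>+\<omega>. indicator (visits_below {0..} l) \<omega> \<partial>P x)"
    using visits_below_sets[OF assms(1)] by simp
  also have "\<dots> \<le> (\<integral>\<^sup>+\<omega>. indicator {\<omega>. Tminus X \<zeta> l \<omega> < \<zeta> \<omega>} \<omega> \<partial>P x)"
    by (intro nn_integral_mono) (auto simp: indicator_def dest: Tminus_less_zeta_if_visits_below)
  also have "\<dots> = ennreal (c x l)" using passage_prob[OF assms] .
  finally show ?thesis
    using c_pos[OF assms] by (simp add: emeasure_eq_measure ennreal_le_iff)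
qed

lemma le_measure_visits_below:
  assumes "x \<in> I" "l \<in> I" "l \<le> x" "l < l'"
  shows "c x l \<le> measure (P x) (visits_below {0..} l')"
proof -
  interpret prob_space "P x" using prob_space_P[OF assms(1)] .
  have "ennreal (c x l) = (\<integral>\<^sup>+\<omega>. indicator {\<omega>. Tminus X \<zeta> l \<omega> < \<zeta> \<omega>} \<omega> \<partial>P x)"
    using passage_prob[OF assms(1-3)] by simp
  also have "\<dots> \<le> (\<integral>\<^sup>+\<omega>. indicator (visits_below {0..} l') \<omega> \<partial>P x)"
    using space_P[OF assms(1)] visits_below_if_Tminus_less_zeta[OF _ assms(4)]
    by (intro nn_integral_mono) (auto simp: indicator_def)
  also have "\<dots> = emeasure (P x) (visits_below {0..} l')"
    using visits_below_sets[OF assms(1)] by simp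
  finally show ?thesis by (simp add: emeasure_eq_measure ennreal_le_iff)
qed

lemma c_mono_on: "x \<in> I \<Longrightarrow> mono_on {l\<in>I. l \<le> x} (c x)"
proof (rule mono_onI)
  fix a b assume "x \<in> I" "a \<in> {l\<in>I. l \<le> x}" "b \<in> {l\<in>I. l \<le> x}" "a \<le> b"
  then show "c x a \<le> c x b"
    using le_measure_visits_below[of x a b] measure_visits_below_le[of x b]
    by (cases "a = b") auto
qed

lemma laplace_integrand_le:
  assumes x: "x \<in> I" and l: "l \<in> I" "l \<le> x" and \<kappa>: "0 \<le> \<kappa>" and M: "M \<subseteq> R"
    and passage_in_R: "Tminus X \<zeta> l \<omega> < \<zeta> \<omega> \<Longrightarrow> \<omega> \<in> R"
    and late: "Tminus X \<zeta> l \<omega> < \<zeta> \<omega> \<Longrightarrow> ennreal (V x - V l) \<le> Tminus X \<zeta> l \<omega>"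
    and later_on_M: "\<omega> \<in> M \<Longrightarrow> Tminus X \<zeta> l \<omega> < \<zeta> \<omega> \<Longrightarrow> ennreal (V x - V l + \<kappa>) \<le> Tminus X \<zeta> l \<omega>"
  shows "indicator {\<omega>. Tminus X \<zeta> l \<omega> < \<zeta> \<omega>} \<omega> * ennreal (exp (- 1 * enn2real (Tminus X \<zeta> l \<omega>)))
    \<le> ennreal (exp (- (V x - V l))) * indicator (R - M) \<omega> + ennreal (exp (- (V x - V l + \<kappa>))) * indicator M \<omega>"
proof (cases "Tminus X \<zeta> l \<omega> < \<zeta> \<omega>")
  case True
  have "Tminus X \<zeta> l \<omega> < \<infinity>" using True top.not_eq_extremum by fastforce
  then have enn2real_ge: "b \<le> enn2real (Tminus X \<zeta> l \<omega>)" if "ennreal b \<le> Tminus X \<zeta> l \<omega>" "0 \<le> b" for b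
    using enn2real_mono[OF that(1)] that(2) by simp
  have d: "0 \<le> V x - V l" using V_le_iff[OF l(1) x] l(2) by simp
  show ?thesis
  proof (cases "\<omega> \<in> M")
    case True
    then have "V x - V l + \<kappa> \<le> enn2real (Tminus X \<zeta> l \<omega>)"
      using later_on_M \<open>Tminus X \<zeta> l \<omega> < \<zeta> \<omega>\<close> enn2real_ge d \<kappa> by simp
    then show ?thesis using True \<open>Tminus X \<zeta> l \<omega> < \<zeta> \<omega>\<close> by (simp add: ennreal_leI)
  next
    case False
    have "V x - V l \<le> enn2real (Tminus X \<zeta> l \<omega>)" using late True enn2real_ge d by simp
    then show ?thesis using False passage_in_R True by (simp add: ennreal_leI)
  qed
qed simp

lemma c_le_by_laplace_gap:
  assumes x: "x \<in> I" and l: "l \<in> I" "l \<le> x" and \<kappa>: "0 \<le> \<kappa>"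
    and R: "R \<in> sets (P x)" and M: "M \<in> sets (P x)" "M \<subseteq> R"
    and passage_in_R: "\<And>\<omega>. \<omega> \<in> \<Omega> \<Longrightarrow> Tminus X \<zeta> l \<omega> < \<zeta> \<omega> \<Longrightarrow> \<omega> \<in> R"
    and late: "AE \<omega> in P x. Tminus X \<zeta> l \<omega> < \<zeta> \<omega> \<longrightarrow> ennreal (V x - V l) \<le> Tminus X \<zeta> l \<omega>"
    and later_on_M: "AE \<omega> in P x. \<omega> \<in> M \<longrightarrow> Tminus X \<zeta> l \<omega> < \<zeta> \<omega> \<longrightarrow>
                       ennreal (V x - V l + \<kappa>) \<le> Tminus X \<zeta> l \<omega>"
  shows "c x l \<le> measure (P x) R - (1 - exp (- \<kappa>)) * measure (P x) M"
proof -
  interpret prob_space "P x" using prob_space_P[OF x] .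
  define d where "d = V x - V l"
  have "AE \<omega> in P x. indicator {\<omega>. Tminus X \<zeta> l \<omega> < \<zeta> \<omega>} \<omega> * ennreal (exp (- 1 * enn2real (Tminus X \<zeta> l \<omega>)))
      \<le> ennreal (exp (- d)) * indicator (R - M) \<omega> + ennreal (exp (- (d + \<kappa>))) * indicator M \<omega>"
    using late later_on_M AE_space
  proof eventually_elim
    case (elim \<omega>)
    show ?case unfolding d_def
      by (rule laplace_integrand_le[OF x l \<kappa> M(2)]) (use elim passage_in_R space_P[OF x] in auto)
  qed
  then have "(\<integral>\<^sup>+\<omega>. indicator {\<omega>. Tminus X \<zeta> l \<omega> < \<zeta> \<omega>} \<omega> * ennreal (exp (- 1 * enn2real (Tminus X \<zeta> l \<omega>))) \<partial>P x)
      \<le> (\<integral>\<^sup>+\<omega>. ennreal (exp (- d)) * indicator (R - M) \<omega> + ennreal (exp (- (d + \<kappa>))) * indicator M \<omega> \<partial>P x)"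
    by (rule nn_integral_mono_AE)
  moreover have "(\<integral>\<^sup>+\<omega>. indicator {\<omega>. Tminus X \<zeta> l \<omega> < \<zeta> \<omega>} \<omega> * ennreal (exp (- 1 * enn2real (Tminus X \<zeta> l \<omega>))) \<partial>P x)
      = ennreal (c x l * exp (- d))"
    using laplace[OF x l, of 1] by (simp add: d_def)
  ultimately have "ennreal (c x l * exp (- d))
      \<le> (\<integral>\<^sup>+\<omega>. ennreal (exp (- d)) * indicator (R - M) \<omega> + ennreal (exp (- (d + \<kappa>))) * indicator M \<omega> \<partial>P x)"
    by simp
  also have "\<dots> = ennreal (exp (- d)) * emeasure (P x) (R - M) + ennreal (exp (- (d + \<kappa>))) * emeasure (P x) M"
    using R M by (simp add: nn_integral_add nn_integral_cmult_indicator sets.Diff)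
  also have "\<dots> = ennreal (exp (- d) * (prob R - prob M) + exp (- (d + \<kappa>)) * prob M)"
    using R M finite_measure_mono[OF M(2) R]
    by (simp add: emeasure_eq_measure finite_measure_Diff ennreal_mult ennreal_plus)
  finally have "c x l * exp (- d) \<le> exp (- d) * (prob R - prob M) + exp (- (d + \<kappa>)) * prob M"
    using finite_measure_mono[OF M(2) R] by (subst (asm) ennreal_le_iff) auto
  also have "\<dots> = exp (- d) * (prob R - (1 - exp (- \<kappa>)) * prob M)"
    by (simp add: exp_add[symmetric] algebra_simps)
  finally show ?thesis by (simp add: mult.commute)
qed

lemma dip_while_above_prob_pos:
  assumes z: "z \<in> I" and l: "l \<in> I" "l \<le> z" and a: "0 \<le> a" and m: "m < drift z a"
  shows "0 < (\<integral>\<^sup>+\<omega>. indicator (path_dips {0..} l - path_dips {0..a} m) (Xpath X \<zeta> \<omega>) \<partial>P z)"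
proof -
  interpret prob_space "P z" using prob_space_P[OF z] .
  obtain \<alpha> where \<alpha>: "\<alpha> \<in> I" "\<alpha> < l" using exists_less_in_I[OF l(1)] .
  have "AE \<omega> in P z. indicator (visits_below {0..} l) \<omega>
      \<le> (indicator (path_dips {0..} l - path_dips {0..a} m) (Xpath X \<zeta> \<omega>) :: ennreal)"
    using path_above_drift_AE[OF z] AE_space
  proof eventually_elim
    case (elim \<omega>)
    then have \<omega>: "\<omega> \<in> \<Omega>" using space_P[OF z] by simp
    have "\<omega> \<notin> visits_below {0..a} m"
    proof
      assume "\<omega> \<in> visits_below {0..a} m"
      then obtain r where r: "0 \<le> r" "r \<le> a" "ennreal r < \<zeta> \<omega>" "X r \<omega> < m"
        unfolding visits_below_def by auto
      have "drift z a \<le> drift z r" using drift_le_iff[OF z a r(1)] r(2) by simp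
      then show False using elim(1) r m by force
    qed
    then show ?case using \<omega> by (simp add: indicator_def Xpath_in_path_dips_iff)
  qed
  then have "emeasure (P z) (visits_below {0..} l)
      \<le> (\<integral>\<^sup>+\<omega>. indicator (path_dips {0..} l - path_dips {0..a} m) (Xpath X \<zeta> \<omega>) \<partial>P z)"
    using visits_below_sets[OF z] by (simp add: nn_integral_mono_AE flip: nn_integral_indicator)
  moreover have "0 < emeasure (P z) (visits_below {0..} l)"
    using le_measure_visits_below[OF z \<alpha>(1) _ \<alpha>(2)] c_pos[OF z \<alpha>(1)] \<alpha> l(2)
    by (simp add: emeasure_eq_measure)
  ultimately show ?thesis by (rule order.strict_trans2[rotated])
qed

lemma dip_event_prob_pos:
  assumes x: "x \<in> I" and t: "t \<in> \<rat>" "0 \<le> t"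
    and A: "A \<in> F t" "A \<subseteq> {\<omega>. ennreal t < \<zeta> \<omega> \<and> z0 < X t \<omega>}" "emeasure (P x) A \<noteq> 0"
    and z0: "z0 \<in> I" and l: "l \<in> I" "l \<le> z0" and a: "0 \<le> a" and m: "m \<in> I" "V m \<le> V z0 - a"
  shows "0 < measure (P x) (A \<inter> (visits_below {t..} l - visits_below {t..t + a} m))"
proof -
  interpret prob_space "P x" using prob_space_P[OF x] .
  let ?H = "indicator (path_dips {0..} l - path_dips {0..a} m) :: (real \<Rightarrow> ereal) \<Rightarrow> ennreal"
  let ?M = "A \<inter> (visits_below {t..} l - visits_below {t..t + a} m)"
  have A_\<Omega>: "A \<subseteq> \<Omega>" using F_sets_into_space[OF t(2) A(1)] .
  have "0 < (\<integral>\<^sup>+\<omega>. indicator A \<omega> * ?H (Xshift X \<zeta> (\<lambda>_. ennreal t) \<omega>) \<partial>P x)"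
  proof (rule markov_positive[OF x t(2) A(1) _ A(3) borel_measurable_indicator_path_dips_diff])
    show "A \<subseteq> {\<omega>. ennreal t < \<zeta> \<omega>}" using A(2) by blast
    fix \<omega> assume "\<omega> \<in> A"
    then have alive: "ennreal t < \<zeta> \<omega>" and above: "z0 < X t \<omega>" and "\<omega> \<in> \<Omega>"
      using A(2) A_\<Omega> by auto
    then have z: "X t \<omega> \<in> I" using path_in_I t(2) by blast
    have "V m < V (drift (X t \<omega>) a)"
      using V_drift[OF z a] V_less_iff[OF z0 z] above m(2) by simp
    then have "m < drift (X t \<omega>) a" using V_less_iff[OF m(1) drift_in_I[OF z a]] by simp
    then show "0 < (\<integral>\<^sup>+\<omega>'. ?H (Xpath X \<zeta> \<omega>') \<partial>P (X t \<omega>))"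
      using dip_while_above_prob_pos[OF z l(1) _ a] l(2) above by simp
  qed
  also have "indicator A \<omega> * ?H (Xshift X \<zeta> (\<lambda>_. ennreal t) \<omega>) = indicator ?M \<omega>" for \<omega>
  proof -
    have shifted: "{r. t \<le> r \<and> r - t \<in> {0..}} = {t..}" "{r. t \<le> r \<and> r - t \<in> {0..a}} = {t..t + a}"
      by auto
    show ?thesis
      using A_\<Omega> Xshift_in_path_dips_iff[OF _ t, of \<omega> "{0..}" l] Xshift_in_path_dips_iff[OF _ t, of \<omega> "{0..a}" m]
      unfolding shifted by (auto simp: indicator_def)
  qed
  then have "(\<integral>\<^sup>+\<omega>. indicator A \<omega> * ?H (Xshift X \<zeta> (\<lambda>_. ennreal t) \<omega>) \<partial>P x) = emeasure (P x) ?M"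
    using A(1) F_subset_sets_P[OF x t(2)] visits_below_sets[OF x] by auto
  finally show ?thesis by (simp add: emeasure_eq_measure)
qed

lemma Tminus_ge_if_no_visit:
  assumes x: "x \<in> I" and \<omega>: "\<omega> \<in> \<Omega>" and t: "0 \<le> t"
    and above: "\<forall>s\<ge>0. ennreal s < \<zeta> \<omega> \<longrightarrow> drift x s \<le> X s \<omega>"
    and l: "l < drift x t" "l < m" and no_visit: "\<omega> \<notin> visits_below {t..t + a} m"
  shows "ennreal (t + a) \<le> Tminus X \<zeta> l \<omega>"
proof (rule Tminus_ge)
  fix s assume s: "0 \<le> s" "ennreal s < \<zeta> \<omega>" "X s \<omega> \<le> l"
  show "t + a \<le> s"
  proof (rule ccontr)
    assume "\<not> t + a \<le> s"
    show False
    proof (cases "s \<le> t")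
      case True
      then show False
        using drift_le_iff[OF x t s(1)] above s l(1) by force
    next
      case False
      obtain r where "r \<in> \<rat>" "s < r" "r < t + a" "ennreal r < \<zeta> \<omega>" "X r \<omega> \<in> {..<m}"
        using rational_time_after[OF \<omega> s(1,2), of "{..<m}" "t + a"] s(3) l(2) \<open>\<not> t + a \<le> s\<close> by auto
      then have "\<omega> \<in> visits_below {t..t + a} m"
        using \<omega> False s(1) unfolding visits_below_def by (auto intro!: bexI[of _ r])
      then show False using no_visit by contradiction
    qed
  qed
qed

lemma dip_event_measure_le_c_increment:
  assumes x: "x \<in> I" and t: "0 \<le> t" and l': "l' \<in> I" "l' < drift x t"
    and l'': "l'' \<in> I" "l' < l''" "l'' \<le> x" and m: "l' < m"
    and \<kappa>: "0 \<le> \<kappa>" and a: "t + a = V x - V l' + \<kappa>"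
    and A: "A \<in> sets (P x)" "A \<subseteq> \<Omega>"
  shows "(1 - exp (- \<kappa>)) * measure (P x) (A \<inter> (visits_below {t..} l' - visits_below {t..t + a} m))
    \<le> c x l'' - c x l'"
proof -
  let ?M = "A \<inter> (visits_below {t..} l' - visits_below {t..t + a} m)"
  let ?R = "visits_below {0..} l''"
  have l'_x: "l' \<le> x" using l'(2) drift_le_start[OF x t] by simp
  have "c x l' \<le> measure (P x) ?R - (1 - exp (- \<kappa>)) * measure (P x) ?M"
  proof (rule c_le_by_laplace_gap[OF x l'(1) l'_x \<kappa>])
    show "?R \<in> sets (P x)" "?M \<in> sets (P x)" using visits_below_sets[OF x] A(1) by auto
    show "?M \<subseteq> ?R" using visits_below_mono[of "{t..}" "{0..}" l' l''] t l''(2) by auto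
    show "\<omega> \<in> ?R" if "\<omega> \<in> \<Omega>" "Tminus X \<zeta> l' \<omega> < \<zeta> \<omega>" for \<omega>
      using visits_below_if_Tminus_less_zeta[OF that(1) l''(2) that(2)] .
    show "AE \<omega> in P x. Tminus X \<zeta> l' \<omega> < \<zeta> \<omega> \<longrightarrow> ennreal (V x - V l') \<le> Tminus X \<zeta> l' \<omega>"
      using path_above_drift_AE[OF x] by eventually_elim (use Tminus_ge_if_path_above_drift[OF x l'(1)] in blast)
    show "AE \<omega> in P x. \<omega> \<in> ?M \<longrightarrow> Tminus X \<zeta> l' \<omega> < \<zeta> \<omega> \<longrightarrow>
        ennreal (V x - V l' + \<kappa>) \<le> Tminus X \<zeta> l' \<omega>"
      using path_above_drift_AE[OF x]
    proof eventually_elim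
      case (elim \<omega>)
      show ?case
      proof (intro impI)
        assume "\<omega> \<in> ?M"
        then have "ennreal (t + a) \<le> Tminus X \<zeta> l' \<omega>"
          using Tminus_ge_if_no_visit[OF x _ t elim l'(2) m, of a] A(2) by blast
        then show "ennreal (V x - V l' + \<kappa>) \<le> Tminus X \<zeta> l' \<omega>" using a by simp
      qed
    qed
  qed
  then show ?thesis using measure_visits_below_le[OF x l''(1,3)] by linarith
qed

lemma c_continuity_point_below:
  assumes x: "x \<in> I" and y: "y \<in> I" "y \<le> x"
  obtains l where "l \<in> I" "l < y" "continuous (at l within {l\<in>I. l \<le> x}) (c x)"
proof -
  obtain \<alpha> where \<alpha>: "\<alpha> \<in> I" "\<alpha> < y" using exists_less_in_I[OF y(1)] .
  have "{\<alpha><..<y} \<subseteq> {l\<in>I. l \<le> x}" using atLeastAtMost_subset_I[OF \<alpha>(1) y(1)] y(2) by auto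
  then obtain l where l: "l \<in> {\<alpha><..<y}" "continuous (at l within {l\<in>I. l \<le> x}) (c x)"
    using mono_on_continuity_point[OF c_mono_on[OF x]] \<alpha>(2) by blast
  have "l \<in> I" using atLeastAtMost_subset_I[OF \<alpha>(1) y(1)] l(1) by auto
  then show ?thesis using that l by simp
qed

lemma c_increment_small:
  assumes cont: "continuous (at l within {l\<in>I. l \<le> x}) (c x)" and \<epsilon>: "0 < \<epsilon>"
    and l: "l \<in> I" and y: "y \<in> I" "y \<le> x" "l < y"
  obtains l' where "l' \<in> I" "l < l'" "l' < y" "c x l' - c x l < \<epsilon>"
proof -
  obtain d where d: "0 < d" "\<forall>l'\<in>{l\<in>I. l \<le> x}. dist l' l < d \<longrightarrow> dist (c x l') (c x l) < \<epsilon>"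
    using cont \<epsilon> unfolding continuous_within_eps_delta by blast
  define l' where "l' = min (l + d / 2) ((l + y) / 2)"
  have l': "l < l'" "l' < y" using d(1) y(3) by (auto simp: l'_def min_less_iff_disj)
  then have "l' \<in> I" using atLeastAtMost_subset_I[OF l y(1)] by auto
  moreover have "dist l' l < d" using l' d(1) by (simp add: l'_def dist_real_def)
  ultimately have "dist (c x l') (c x l) < \<epsilon>" using d(2) l' y(2) by auto
  then show ?thesis using that \<open>l' \<in> I\<close> l' by (simp add: dist_real_def)
qed

text \<open>If \<open>X\<^sub>t > drift x t + \<delta>\<close> on an event \<open>A\<close> of positive probability, choose a continuity
  point \<open>l'\<close> of \<open>c x\<close> below \<open>drift x t\<close>.  Restarted on \<open>A\<close>, the process reaches \<open>l'\<close> (with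
  positive probability) only after staying above a level \<open>m > l'\<close> long enough to be late by \<open>\<kappa>/2\<close>,
  which makes \<open>c x\<close> increase by a fixed amount just to the right of \<open>l'\<close>.\<close>

lemma path_exceeds_drift_null:
  assumes x: "x \<in> I" and t: "t \<in> \<rat>" "0 \<le> t" and \<delta>: "0 < \<delta>"
  shows "{\<omega>\<in>\<Omega>. ennreal t < \<zeta> \<omega> \<and> drift x t + \<delta> < X t \<omega>} \<in> null_sets (P x)"
proof (rule ccontr)
  interpret prob_space "P x" using prob_space_P[OF x] .
  define y0 where "y0 = drift x t"
  define z0 where "z0 = y0 + \<delta>"
  define A where "A = {\<omega>\<in>\<Omega>. ennreal t < \<zeta> \<omega> \<and> z0 < X t \<omega>}"
  assume "{\<omega>\<in>\<Omega>. ennreal t < \<zeta> \<omega> \<and> drift x t + \<delta> < X t \<omega>} \<notin> null_sets (P x)"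
  moreover have A_F: "A \<in> F t" unfolding A_def using alive_event_in_F[OF t(2), of "{z0<..}"] by simp
  then have A_sets: "A \<in> sets (P x)" using F_subset_sets_P[OF x t(2)] by blast
  ultimately have A_pos: "emeasure (P x) A \<noteq> 0" by (simp add: A_def y0_def z0_def null_sets_def)
  have y0: "y0 \<in> I" "y0 \<le> x" "V y0 = V x - t"
    using drift_in_I[OF x t(2)] drift_le_start[OF x t(2)] V_drift[OF x t(2)] by (simp_all add: y0_def)
  have z0: "z0 \<in> I" "y0 < z0" using I_upward_closed[OF y0(1)] \<delta> by (simp_all add: z0_def)
  define \<kappa> where "\<kappa> = V z0 - V y0"
  have \<kappa>: "0 < \<kappa>" using V_less_iff[OF y0(1) z0(1)] z0(2) by (simp add: \<kappa>_def)
  obtain l' where l': "l' \<in> I" "l' < y0" and cont: "continuous (at l' within {l\<in>I. l \<le> x}) (c x)"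
    using c_continuity_point_below[OF x y0(1,2)] .
  have "V l' < V y0" using V_less_iff[OF l'(1) y0(1)] l'(2) by simp
  define a where "a = V x - V l' - t + \<kappa> / 2"
  have a: "0 \<le> a" using \<open>V l' < V y0\<close> y0(3) \<kappa> by (simp add: a_def)
  obtain m where m: "m \<in> I" "V m = V z0 - a"
    using V_attains[OF z0(1), of a] a by auto
  have "V m = V l' + \<kappa> / 2" using m(2) y0(3) by (simp add: a_def \<kappa>_def field_simps)
  then have "V l' < V m" using \<kappa> by simp
  then have l'_m: "l' < m" using V_less_iff[OF l'(1) m(1)] by simp
  define M where "M = A \<inter> (visits_below {t..} l' - visits_below {t..t + a} m)"
  have "A \<subseteq> {\<omega>. ennreal t < \<zeta> \<omega> \<and> z0 < X t \<omega>}" "l' \<le> z0" "V m \<le> V z0 - a"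
    using l'(2) z0(2) m(2) by (auto simp: A_def)
  then have M_pos: "0 < measure (P x) M"
    unfolding M_def by (rule dip_event_prob_pos[OF x t A_F _ A_pos z0(1) l'(1) _ a m(1)])
  define \<rho> where "\<rho> = 1 - exp (- (\<kappa> / 2))"
  have \<rho>: "0 < \<rho>" using \<kappa> by (simp add: \<rho>_def)
  define \<epsilon> where "\<epsilon> = \<rho> * measure (P x) M / 2"
  have \<epsilon>: "0 < \<epsilon>" using \<rho> M_pos by (simp add: \<epsilon>_def)
  obtain l'' where l'': "l'' \<in> I" "l' < l''" "l'' < y0" "c x l'' - c x l' < \<epsilon>"
    using c_increment_small[OF cont \<epsilon> l'(1) y0(1,2) l'(2)] .
  have "\<rho> * measure (P x) M \<le> c x l'' - c x l'"
  proof -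
    have "l' < drift x t" "l'' \<le> x" "t + a = V x - V l' + \<kappa> / 2" "A \<subseteq> \<Omega>"
      using l'(2) l''(3) y0(2) by (auto simp: y0_def a_def A_def)
    then show ?thesis
      unfolding \<rho>_def M_def
      using dip_event_measure_le_c_increment[OF x t(2) l'(1) _ l''(1,2) _ l'_m _ _ A_sets] \<kappa>
      by simp
  qed
  then show False using l''(4) mult_pos_pos[OF \<rho> M_pos] unfolding \<epsilon>_def by linarith
qed

lemma path_eq_drift_AE:
  assumes x: "x \<in> I"
  shows "AE \<omega> in P x. \<forall>t\<ge>0. ennreal t < \<zeta> \<omega> \<longrightarrow> X t \<omega> = drift x t"
proof -
  let ?Q = "{t::real. t \<in> \<rat> \<and> 0 \<le> t} \<times> (UNIV :: nat set)"
  let ?exceeds = "\<lambda>t n. {\<omega>\<in>\<Omega>. ennreal t < \<zeta> \<omega> \<and> drift x t + 1 / Suc n < X t \<omega>}"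
  have "countable ?Q" by (intro countable_SIGMA countable_subset[OF _ countable_rat]) auto
  then have "AE \<omega> in P x. \<forall>p\<in>?Q. \<omega> \<notin> ?exceeds (fst p) (snd p)"
    by (intro AE_ball_countable' AE_not_in path_exceeds_drift_null[OF x]) auto
  then show ?thesis
    using path_above_drift_AE[OF x] AE_space
  proof eventually_elim
    case (elim \<omega>)
    then have \<omega>: "\<omega> \<in> \<Omega>" using space_P[OF x] by simp
    show ?case
    proof (intro allI impI)
      fix t :: real assume t: "0 \<le> t" "ennreal t < \<zeta> \<omega>"
      have "X t \<omega> \<le> drift x t"
      proof (rule ccontr)
        assume "\<not> X t \<omega> \<le> drift x t"
        then obtain n where "1 / Suc n < X t \<omega> - drift x t"
          using reals_Archimedean by (metis diff_gt_0_iff_gt inverse_eq_divide not_le of_nat_Suc)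
        then have "X t \<omega> \<in> {drift x t + 1 / Suc n<..}" by simp
        then obtain r where r: "r \<in> \<rat>" "t < r" "ennreal r < \<zeta> \<omega>" "X r \<omega> \<in> {drift x t + 1 / Suc n<..}"
          using rational_time_after[OF \<omega> t, of "{drift x t + 1 / Suc n<..}" "t + 1"] by auto
        have "drift x r \<le> drift x t" using drift_le_iff[OF x _ t(1)] r(2) t(1) by simp
        then have "\<omega> \<in> ?exceeds r n" using \<omega> r by auto
        moreover have "(r, n) \<in> ?Q" using r(1,2) t(1) by simp
        ultimately show False using elim(1) by fastforce
      qed
      then show "X t \<omega> = drift x t" using elim(2) t by force
    qed
  qed
qed

lemma survival_prob:
  assumes x: "x \<in> I" and t: "0 \<le> t"
  shows "measure (P x) {\<omega>\<in>space (P x). ennreal t < \<zeta> \<omega>} = c x (drift x t)"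
proof -
  interpret prob_space "P x" using prob_space_P[OF x] .
  let ?l = "drift x t"
  have "AE \<omega> in P x. indicator {\<omega>. Tminus X \<zeta> ?l \<omega> < \<zeta> \<omega>} \<omega>
      = (indicator {\<omega>\<in>space (P x). ennreal t < \<zeta> \<omega>} \<omega> :: ennreal)"
    using path_eq_drift_AE[OF x] AE_space
  proof eventually_elim
    case (elim \<omega>)
    have "Tminus X \<zeta> ?l \<omega> < \<zeta> \<omega> \<longleftrightarrow> ennreal t < \<zeta> \<omega>"
    proof
      assume "ennreal t < \<zeta> \<omega>"
      then show "Tminus X \<zeta> ?l \<omega> < \<zeta> \<omega>" using Tminus_le[of t \<omega> ?l] elim(1) t by simp
    next
      assume "Tminus X \<zeta> ?l \<omega> < \<zeta> \<omega>"
      then obtain s where s: "0 \<le> s" "ennreal s < \<zeta> \<omega>" "X s \<omega> \<le> ?l"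
        by (rule Tminus_less_zetaE)
      then have "t \<le> s" using elim(1) drift_le_iff[OF x s(1) t] by simp
      then show "ennreal t < \<zeta> \<omega>" using s(2) ennreal_leI[of t s] by simp
    qed
    then show ?case using elim(2) by (simp add: indicator_def)
  qed
  then have "ennreal (c x ?l) = emeasure (P x) {\<omega>\<in>space (P x). ennreal t < \<zeta> \<omega>}"
    using passage_prob[OF x drift_in_I[OF x t] drift_le_start[OF x t]]
      alive_event_sets[OF x t, of UNIV] space_P[OF x]
    by (simp add: nn_integral_cong_AE)
  then show ?thesis
    using c_pos[OF x drift_in_I[OF x t] drift_le_start[OF x t]] by (simp add: emeasure_eq_measure)
qed

end

theorem mainTheorem11:
  fixes I :: "real set" and \<Omega> :: "'w set" and F :: "real \<Rightarrow> 'w set set"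
    and P :: "real \<Rightarrow> 'w measure" and X :: "real \<Rightarrow> 'w \<Rightarrow> real" and \<zeta> :: "'w \<Rightarrow> ennreal"
    and v w :: "real \<Rightarrow> real" and \<theta> :: real and V :: "real \<Rightarrow> real"
  assumes setting: "standing_setting I \<Omega> F P X \<zeta>"
    and I_open: "open I"
    and no_neg_jumps: "as_surely I P (\<lambda>\<omega>. \<forall>t. 0 < t \<and> ennreal t < \<zeta> \<omega> \<longrightarrow>
                          Lim (at_left t) (\<lambda>s. X s \<omega>) \<le> X t \<omega>)"
    and v_meas: "v \<in> borel_measurable (restrict_space lebesgue I)"
    and v_pos: "\<forall>y\<in>I. 0 < v y"
    and w_meas: "w \<in> borel_measurable (restrict_space lebesgue I)"
    and w_nonneg: "\<forall>y\<in>I. 0 \<le> w y"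
    and loc_int: "\<forall>a b. {a..b} \<subseteq> I \<longrightarrow> set_integrable lebesgue {a..b} (\<lambda>y. (1 + w y) / v y)"
    and diverge: "\<exists>x\<in>I. (\<integral>\<^sup>+y. indicator {y\<in>I. y \<le> x} y * ennreal (1 / v y) \<partial>lebesgue) = \<infinity>"
    and theta: "\<theta> \<in> I"
    and V_def: "\<forall>a\<in>I. V a = Vscale v \<theta> a"
    and laplace: "\<forall>x\<in>I. \<forall>l\<in>I. l \<le> x \<longrightarrow> (\<forall>q\<ge>0.
         (\<integral>\<^sup>+\<omega>. indicator {\<omega>. Tminus X \<zeta> l \<omega> < \<zeta> \<omega>} \<omega>
                   * ennreal (exp (- q * enn2real (Tminus X \<zeta> l \<omega>))) \<partial>P x)
         = ennreal (exp (- (LINT t:{0..V x - V l}|lebesgue. w (inv_into I V (V x - t)))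
                         - q * (V x - V l))))"
  shows "\<forall>x\<in>I.
     (AE \<omega> in P x. \<forall>t\<ge>0. ennreal t < \<zeta> \<omega> \<longrightarrow> X t \<omega> = inv_into I V (V x - t)) \<and>
     (\<forall>t\<ge>0. measure (P x) {\<omega>\<in>space (P x). ennreal t < \<zeta> \<omega>}
              = exp (- (LINT s:{0..t}|lebesgue. w (inv_into I V (V x - s)))))"
proof -
  define c where "c x l = exp (- (LINT t:{0..V x - V l}|lebesgue. w (inv_into I V (V x - t))))" for x l
  have "set_integrable lebesgue {a..b} (\<lambda>y. 1 / v y)" if "{a..b} \<subseteq> I" for a b
  proof (rule set_integrable_inverse_if_bounded[where w = w])
    show "v \<in> borel_measurable (restrict_space lebesgue {a..b})"
      using measurable_restrict_mono[OF v_meas that] .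
  qed (use that v_pos w_nonneg loc_int in auto)
  with setting I_open v_pos diverge theta V_def laplace
  interpret downward_drift I v \<theta> V \<Omega> F P X \<zeta> c
    by unfold_locales (auto simp: standing_setting_def c_def exp_diff mult_exp_exp)
  show ?thesis
    using path_eq_drift_AE survival_prob V_drift by (simp add: drift_def c_def)
qed

end
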